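(* Let $\alpha\in(0,1)$ be a fixed constant, and for each $n$ let $m,s,t$ be integers with $m/n=t/s=\alpha$, $t\ge 3$, $s\le n^{c_0}$ for an absolute constant $0<c_0<1$. Let $G^*=(V_L,V_R,E^* )$ be drawn uniformly from $\mathcal{G}_{m,n,s,t}$. Suppose $1\le\ell=\ell(n)\le c\cdot\frac{\log m}{\log(ts)}$ for a small enough universal constant $c>0$. Then, with high probability: (1) there exists $v^*\in V_L$ such that $\mathsf{B}_{G^*}(v^*,2\ell+1)$ does not contain a cycle; (2) $G^*$ is bicycle-free at radius $2\ell+1$.
   Context: $\mathcal{G}_{m,n,s,t}$ is the set of bipartite graphs with left vertex set $V_L$ of size $n$, every left vertex of degree $t$, and right vertex set $V_R$ of size $m$, every right vertex of degree $s$. For a vertex $v$ and $\ell\in\mathbb{N}$, $\mathsf{B}_G(v,\ell)$ is the subgraph induced on vertices at distance at most $\ell$ from $v$. $G$ is bicycle-free at radius $\ell$ if for every vertex $v$, $\mathsf{B}_G(v,\ell)$ contains at most one cycle. "With high probability" means with probability tending to $1$ as $n\to\infty$. *)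

theory Defs
  imports "HOL-Probability.Probability"
begin

text \<open>Bipartite graphs with left vertices Inl i (i < n) and right vertices Inr j (j < m),
  given by their edge relation E \<subseteq> {..<n} \<times> {..<m}.\<close>

definition biregular_graphs :: "nat \<Rightarrow> nat \<Rightarrow> nat \<Rightarrow> nat \<Rightarrow> (nat \<times> nat) set set" where
  "biregular_graphs m n s t =
     {E. E \<subseteq> {..<n} \<times> {..<m}
         \<and> (\<forall>i<n. card {j. (i, j) \<in> E} = t)
         \<and> (\<forall>j<m. card {i. (i, j) \<in> E} = s)}"

definition bip_edges :: "(nat \<times> nat) set \<Rightarrow> (nat + nat) set set" where
  "bip_edges E = {{Inl i, Inr j} | i j. (i, j) \<in> E}"

definition adj_rel :: "'v set set \<Rightarrow> ('v \<times> 'v) set" where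
  "adj_rel F = {(x, y). {x, y} \<in> F \<and> x \<noteq> y}"

definition ball_verts :: "'v set set \<Rightarrow> 'v \<Rightarrow> nat \<Rightarrow> 'v set" where
  "ball_verts F v r = {w. \<exists>k\<le>r. (v, w) \<in> adj_rel F ^^ k}"

definition induced_edges :: "'v set set \<Rightarrow> 'v set \<Rightarrow> 'v set set" where
  "induced_edges F S = {e \<in> F. e \<subseteq> S}"

definition is_cycle :: "'v set set \<Rightarrow> 'v set set \<Rightarrow> bool" where
  "is_cycle F C \<longleftrightarrow> (\<exists>vs. length vs \<ge> 3 \<and> distinct vs
      \<and> (\<forall>i<length vs. {vs ! i, vs ! ((i + 1) mod length vs)} \<in> F)
      \<and> C = {{vs ! i, vs ! ((i + 1) mod length vs)} | i. i < length vs})"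

definition ball_graph :: "(nat \<times> nat) set \<Rightarrow> nat + nat \<Rightarrow> nat \<Rightarrow> (nat + nat) set set" where
  "ball_graph E v r = induced_edges (bip_edges E) (ball_verts (bip_edges E) v r)"

definition bicycle_free_at :: "nat \<Rightarrow> nat \<Rightarrow> (nat \<times> nat) set \<Rightarrow> nat \<Rightarrow> bool" where
  "bicycle_free_at n m E r \<longleftrightarrow>
     (\<forall>v \<in> Inl ` {..<n} \<union> Inr ` {..<m}.
        \<forall>C C'. is_cycle (ball_graph E v r) C \<longrightarrow> is_cycle (ball_graph E v r) C' \<longrightarrow> C = C')"

end

(* A cycle in the ball of radius r around v contains an edge outside the breadth-first search
   tree of the ball: at a vertex of the cycle farthest from v both cycle edges lead one level
   closer to v, and only one of them is a tree edge. Applied to their symmetric difference, two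
   distinct cycles yield two distinct non-tree edges.

   A ball with e non-tree edges contains a witness: a subtree with p <= 2e(r+1) vertices through v
   together with the e extra edges, p - 1 + e edges in all. A switching argument shows that a
   uniformly random biregular graph contains a fixed set of k edges with probability at most
   (2s/n)^k, while there are at most (n+m)^(p-1) e^p p^(2e) witnesses with p vertices. As the bound
   on L gives s^O(L) <= sqrt n, the ball around a fixed vertex has a non-tree edge with probability
   O(log^3 n / sqrt n), and a union bound over all n + m vertices shows that two non-tree edges in
   some ball have probability O(log^5 n / sqrt n). *)

theory Submission
  imports Defs "HOL-Real_Asymp.Real_Asymp"
begin

section \<open>Biregular graphs\<close>

lemma biregular_graphs_subset: "E \<in> biregular_graphs m n s t \<Longrightarrow> E \<subseteq> {..<n} \<times> {..<m}"
  by (simp add: biregular_graphs_def)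

lemma biregular_graphs_row_card:
  "E \<in> biregular_graphs m n s t \<Longrightarrow> i < n \<Longrightarrow> card {j. (i, j) \<in> E} = t"
  by (simp add: biregular_graphs_def)

lemma biregular_graphs_col_card:
  "E \<in> biregular_graphs m n s t \<Longrightarrow> j < m \<Longrightarrow> card {i. (i, j) \<in> E} = s"
  by (simp add: biregular_graphs_def)

lemma biregular_graphs_row_card_le:
  assumes "E \<in> biregular_graphs m n s t" shows "card {j. (i, j) \<in> E} \<le> t"
proof (cases "i < n")
  case False
  then have "{j. (i, j) \<in> E} = {}" using biregular_graphs_subset[OF assms] by auto
  then show ?thesis by simp
qed (simp add: biregular_graphs_row_card[OF assms])

lemma biregular_graphs_col_card_le:
  assumes "E \<in> biregular_graphs m n s t" shows "card {i. (i, j) \<in> E} \<le> s"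
proof (cases "j < m")
  case False
  then have "{i. (i, j) \<in> E} = {}" using biregular_graphs_subset[OF assms] by auto
  then show ?thesis by simp
qed (simp add: biregular_graphs_col_card[OF assms])

lemma finite_biregular_graphs: "finite (biregular_graphs m n s t)"
proof (rule finite_subset)
  show "biregular_graphs m n s t \<subseteq> Pow ({..<n} \<times> {..<m})"
    by (auto simp: biregular_graphs_def)
qed simp

lemma biregular_graph_finite: "E \<in> biregular_graphs m n s t \<Longrightarrow> finite E"
  using finite_subset[OF biregular_graphs_subset] by blast

lemma converse_in_biregular_graphs:
  "E \<in> biregular_graphs m n s t \<Longrightarrow> E\<inverse> \<in> biregular_graphs n m t s"
  by (auto simp: biregular_graphs_def)

lemma finite_row: "finite E \<Longrightarrow> finite {j. (i, j) \<in> E}"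
  by (rule finite_subset[of _ "snd ` E"]) force+

lemma finite_col: "finite E \<Longrightarrow> finite {i. (i, j) \<in> E}"
  by (rule finite_subset[of _ "fst ` E"]) force+

lemma card_rows_biregular:
  assumes E: "E \<in> biregular_graphs m n s t" and A: "A \<subseteq> {..<n}"
  shows "card (E \<inter> A \<times> UNIV) = card A * t"
proof -
  have fin: "finite E" using biregular_graph_finite[OF E] .
  have "E \<inter> A \<times> UNIV = (SIGMA i:A. {j. (i, j) \<in> E})" by auto
  moreover have "finite A" using A finite_subset by blast
  ultimately have "card (E \<inter> A \<times> UNIV) = (\<Sum>i\<in>A. card {j. (i, j) \<in> E})"
    using fin by (simp add: card_SigmaI finite_row)
  also have "\<dots> = card A * t"
    using A biregular_graphs_row_card[OF E] by (simp add: subset_eq)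
  finally show ?thesis .
qed

lemma card_cols_biregular:
  assumes E: "E \<in> biregular_graphs m n s t" and B: "B \<subseteq> {..<m}"
  shows "card (E \<inter> UNIV \<times> B) = card B * s"
proof -
  have "(E \<inter> UNIV \<times> B)\<inverse> = E\<inverse> \<inter> B \<times> UNIV" by auto
  then show ?thesis
    using card_rows_biregular[OF converse_in_biregular_graphs[OF E] B] card_inverse by metis
qed

lemma card_biregular_graph:
  assumes "E \<in> biregular_graphs m n s t" shows "card E = n * t"
proof -
  have "E \<inter> {..<n} \<times> UNIV = E" using biregular_graphs_subset[OF assms] by auto
  then show ?thesis using card_rows_biregular[OF assms, of "{..<n}"] by simp
qed

lemma card_row_of_pairing:
  assumes "inj_on (\<lambda>k. (f k, g k)) K"
  shows "card {j. (i, j) \<in> (\<lambda>k. (f k, g k)) ` K} = card {k\<in>K. f k = i}"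
proof -
  have "{j. (i, j) \<in> (\<lambda>k. (f k, g k)) ` K} = g ` {k\<in>K. f k = i}" by auto
  moreover have "inj_on g {k\<in>K. f k = i}" using assms by (auto simp: inj_on_def)
  ultimately show ?thesis by (simp add: card_image)
qed

lemma card_residue_class:
  assumes "j < m" shows "card {k. k < m * s \<and> k mod m = j} = s"
proof -
  have "{k. k < m * s \<and> k mod m = j} = (\<lambda>l. j + m * l) ` {..<s}"
  proof (intro equalityI subsetI)
    fix k assume k: "k \<in> {k. k < m * s \<and> k mod m = j}"
    then have "k div m < s" by (simp add: less_mult_imp_div_less mult.commute)
    moreover have "k = j + m * (k div m)" using k mod_mult_div_eq[of k m] by simp
    ultimately show "k \<in> (\<lambda>l. j + m * l) ` {..<s}" by blast
  next
    fix k assume "k \<in> (\<lambda>l. j + m * l) ` {..<s}"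
    then obtain l where l: "l < s" "k = j + m * l" by blast
    have "j + m * l < m * Suc l" using assms by simp
    also have "\<dots> \<le> m * s" using l(1) by (intro mult_le_mono2) simp
    finally show "k \<in> {k. k < m * s \<and> k mod m = j}" using assms l by simp
  qed
  moreover have "inj_on (\<lambda>l. j + m * l) {..<s}" using assms by (intro inj_onI) simp
  ultimately show ?thesis by (simp add: card_image)
qed

lemma inj_on_div_mod:
  fixes t m :: nat
  assumes t: "0 < t" "t \<le> m"
  shows "inj_on (\<lambda>k. (k div t, k mod m)) K"
proof -
  have "k = k'" if "k \<le> k'" "k div t = k' div t" "k mod m = k' mod m" for k k'
  proof -
    have "k' div t * t = k div t * t" using that(2) by simp
    then have "k' < k + t"
      using div_mult_mod_eq[of k t] div_mult_mod_eq[of k' t] mod_less_divisor[OF t(1), of k']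
      by linarith
    then have "k' - k < m" using t that(1) by linarith
    moreover have "m dvd k' - k" using that(1,3) mod_eq_dvd_iff_nat by metis
    ultimately have "k' - k = 0" using nat_dvd_not_less by blast
    then show ?thesis using that(1) by simp
  qed
  then show ?thesis by (intro inj_onI) (metis nat_le_linear prod.inject)
qed

lemma div_fibre_eq:
  fixes t i n :: nat
  assumes "0 < t" "i < n"
  shows "{k \<in> {..<n * t}. k div t = i} = {i * t..<i * t + t}"
proof (intro equalityI subsetI)
  fix k assume "k \<in> {k \<in> {..<n * t}. k div t = i}"
  then show "k \<in> {i * t..<i * t + t}"
    using div_mult_mod_eq[of k t] mod_less_divisor[OF assms(1), of k] by auto
next
  fix k assume k: "k \<in> {i * t..<i * t + t}"
  then have "k div t = i" by (intro div_nat_eqI) (auto simp: mult.commute)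
  moreover have "i * t + t \<le> n * t" using mult_le_mono1[of "Suc i" n t] assms(2) by simp
  then have "k < n * t" using k by simp
  ultimately show "k \<in> {k \<in> {..<n * t}. k div t = i}" by simp
qed

text \<open>The $k$-th of the $n t$ edge slots joins left vertex $k \mathbin{div} t$ to right vertex
  $k \mathbin{mod} m$: every left vertex gets $t$ consecutive residues, and since $n t = m s$
  every residue is hit $s$ times.\<close>

lemma biregular_graphs_nonempty:
  assumes t: "0 < t" "t \<le> m" and nt: "n * t = m * s"
  shows "biregular_graphs m n s t \<noteq> {}"
proof -
  define E where "E = (\<lambda>k. (k div t, k mod m)) ` {..<n * t}"
  note inj = inj_on_div_mod[OF t, of "{..<n * t}"]
  have "E \<subseteq> {..<n} \<times> {..<m}"
    using t by (auto simp: E_def less_mult_imp_div_less)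
  moreover have "card {j. (i, j) \<in> E} = t" if "i < n" for i
    unfolding E_def using card_row_of_pairing[OF inj] div_fibre_eq[OF t(1) that] by simp
  moreover have "card {i. (i, j) \<in> E} = s" if "j < m" for j
  proof -
    have "{i. (i, j) \<in> E} = {i. (j, i) \<in> (\<lambda>k. (k mod m, k div t)) ` {..<n * t}}"
      unfolding E_def by auto
    also have "card \<dots> = card {k \<in> {..<n * t}. k mod m = j}"
      by (rule card_row_of_pairing) (use inj in \<open>auto simp: inj_on_def\<close>)
    also have "\<dots> = s" using card_residue_class[OF that, of s] nt by simp
    finally show ?thesis .
  qed
  ultimately have "E \<in> biregular_graphs m n s t" by (simp add: biregular_graphs_def)
  then show ?thesis by blast
qed

section \<open>Switchings\<close>

definition switch :: "('a \<times> 'b) set \<Rightarrow> 'a \<Rightarrow> 'b \<Rightarrow> 'a \<Rightarrow> 'b \<Rightarrow> ('a \<times> 'b) set" where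
  "switch E i j a b = (E - {(i, j), (a, b)}) \<union> {(i, b), (a, j)}"

definition switchable :: "('a \<times> 'b) set \<Rightarrow> 'a \<Rightarrow> 'b \<Rightarrow> 'a \<Rightarrow> 'b \<Rightarrow> bool" where
  "switchable E i j a b \<longleftrightarrow> (i, j) \<in> E \<and> (a, b) \<in> E \<and> (i, b) \<notin> E \<and> (a, j) \<notin> E"

lemma converse_switch: "(switch E i j a b)\<inverse> = switch (E\<inverse>) j i b a"
  by (auto simp: switch_def)

lemma switchable_converse: "switchable E i j a b \<Longrightarrow> switchable (E\<inverse>) j i b a"
  by (simp add: switchable_def)

lemma card_insert_Diff_singleton:
  "finite A \<Longrightarrow> x \<in> A \<Longrightarrow> y \<notin> A \<Longrightarrow> card (insert y (A - {x})) = card A"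
proof -
  assume "finite A" "x \<in> A" "y \<notin> A"
  then have "card (insert y (A - {x})) = Suc (card (A - {x}))" by simp
  with \<open>finite A\<close> \<open>x \<in> A\<close> show ?thesis by (simp only: card_Suc_Diff1)
qed

lemma switch_row_card:
  assumes E: "finite E" and sw: "switchable E i j a b"
  shows "card {y. (x, y) \<in> switch E i j a b} = card {y. (x, y) \<in> E}"
proof -
  have ai: "a \<noteq> i" using sw by (auto simp: switchable_def)
  consider "x = i" | "x = a" | "x \<noteq> i" "x \<noteq> a" by blast
  then show ?thesis
  proof cases
    case 1
    then have "{y. (x, y) \<in> switch E i j a b} = insert b ({y. (x, y) \<in> E} - {j})"
      using ai by (auto simp: switch_def)
    moreover have "card (insert b ({y. (x, y) \<in> E} - {j})) = card {y. (x, y) \<in> E}"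
      using 1 sw finite_row[OF E] by (intro card_insert_Diff_singleton) (auto simp: switchable_def)
    ultimately show ?thesis by simp
  next
    case 2
    then have "{y. (x, y) \<in> switch E i j a b} = insert j ({y. (x, y) \<in> E} - {b})"
      using ai by (auto simp: switch_def)
    moreover have "card (insert j ({y. (x, y) \<in> E} - {b})) = card {y. (x, y) \<in> E}"
      using 2 sw finite_row[OF E] by (intro card_insert_Diff_singleton) (auto simp: switchable_def)
    ultimately show ?thesis by simp
  next
    case 3
    then show ?thesis by (auto simp: switch_def)
  qed
qed

lemma switch_in_biregular_graphs:
  assumes E: "E \<in> biregular_graphs m n s t" and sw: "switchable E i j a b"
  shows "switch E i j a b \<in> biregular_graphs m n s t"
proof -
  have "switch E i j a b \<subseteq> {..<n} \<times> {..<m}"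
    using biregular_graphs_subset[OF E] sw by (auto simp: switch_def switchable_def)
  moreover have "card {y. (x, y) \<in> switch E i j a b} = t" if "x < n" for x
    using switch_row_card[OF biregular_graph_finite[OF E] sw] biregular_graphs_row_card[OF E that]
    by simp
  moreover have "card {y. (y, x) \<in> switch E i j a b} = s" if "x < m" for x
  proof -
    have "{y. (y, x) \<in> switch E i j a b} = {y. (x, y) \<in> switch (E\<inverse>) j i b a}"
      using converse_switch[of E i j a b] by blast
    also have "card \<dots> = card {y. (x, y) \<in> E\<inverse>}"
      using biregular_graph_finite[OF E] by (intro switch_row_card switchable_converse sw) simp
    finally show ?thesis using biregular_graphs_col_card[OF E that] by simp
  qed
  ultimately show ?thesis by (simp add: biregular_graphs_def)
qed

lemma switch_inj:
  assumes "switchable E i j a b" "switchable E' i j a b" "switch E i j a b = switch E' i j a b"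
  shows "E = E'"
proof -
  have "F = (switch F i j a b - {(i, b), (a, j)}) \<union> {(i, j), (a, b)}" if "switchable F i j a b" for F
    using that by (auto simp: switch_def switchable_def)
  then show ?thesis using assms by metis
qed

definition switch_partners :: "(nat \<times> nat) set \<Rightarrow> nat \<Rightarrow> nat \<Rightarrow> (nat \<times> nat) set \<Rightarrow> (nat \<times> nat) set"
  where "switch_partners E i j H = {(a, b) \<in> E. (i, b) \<notin> E \<and> (a, j) \<notin> E \<and> (a, b) \<notin> H}"

lemma card_switch_partners_ge:
  assumes E: "E \<in> biregular_graphs m n s t" and ij: "(i, j) \<in> E"
    and H: "finite H" "card H \<le> h"
  shows "n * t - (2 * t * s + h) \<le> card (switch_partners E i j H)"
proof -
  have i: "i < n" and j: "j < m" using ij biregular_graphs_subset[OF E] by auto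
  define R where "R = {b. (i, b) \<in> E}"
  define C where "C = {a. (a, j) \<in> E}"
  have "E - switch_partners E i j H \<subseteq> (E \<inter> UNIV \<times> R) \<union> (E \<inter> C \<times> UNIV) \<union> H"
    by (auto simp: switch_partners_def R_def C_def)
  moreover have "card (E \<inter> UNIV \<times> R) = t * s"
    using card_cols_biregular[OF E, of R] biregular_graphs_row_card[OF E i]
      biregular_graphs_subset[OF E] by (auto simp: R_def)
  moreover have "card (E \<inter> C \<times> UNIV) = s * t"
    using card_rows_biregular[OF E, of C] biregular_graphs_col_card[OF E j]
      biregular_graphs_subset[OF E] by (auto simp: C_def)
  ultimately have "card (E - switch_partners E i j H) \<le> 2 * t * s + h"
    using card_mono[OF _ \<open>E - _ \<subseteq> _\<close>] card_Un_le[of "E \<inter> UNIV \<times> R \<union> E \<inter> C \<times> UNIV" H]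
      card_Un_le[of "E \<inter> UNIV \<times> R" "E \<inter> C \<times> UNIV"] biregular_graph_finite[OF E] H
    by (simp add: mult.commute)
  moreover have "switch_partners E i j H \<subseteq> E" by (auto simp: switch_partners_def)
  then have "card E \<le> card (switch_partners E i j H) + card (E - switch_partners E i j H)"
    using card_Un_le[of "switch_partners E i j H" "E - switch_partners E i j H"]
    by (simp add: Un_absorb1)
  ultimately show ?thesis using card_biregular_graph[OF E] by linarith
qed

lemma switch_partner_switch:
  assumes E: "E \<in> biregular_graphs m n s t" "insert (i, j) H \<subseteq> E" and ijH: "(i, j) \<notin> H"
    and ab: "(a, b) \<in> switch_partners E i j H"
  shows "switchable E i j a b" "switch E i j a b \<in> {E' \<in> biregular_graphs m n s t. H \<subseteq> E'}"
    "(a, j) \<in> switch E i j a b" "(i, b) \<in> switch E i j a b"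
proof -
  show sw: "switchable E i j a b" using E(2) ab by (auto simp: switch_partners_def switchable_def)
  show "switch E i j a b \<in> {E' \<in> biregular_graphs m n s t. H \<subseteq> E'}"
    using switch_in_biregular_graphs[OF E(1) sw] E(2) ijH ab by (auto simp: switch_def switch_partners_def)
  show "(a, j) \<in> switch E i j a b" "(i, b) \<in> switch E i j a b" by (auto simp: switch_def)
qed

text \<open>Double counting: switching maps the pairs $(E, (a, b))$ with $E \supseteq H \cup \{(i, j)\}$ and
  $(a, b)$ a switch partner injectively to the pairs $(E', (a, b))$ with $E' \supseteq H$ and
  $(a, j), (i, b) \in E'$.\<close>

lemma card_containing_insert_le:
  assumes ijH: "(i, j) \<notin> H" and H: "finite H" "card H \<le> h"
  shows "card {E \<in> biregular_graphs m n s t. insert (i, j) H \<subseteq> E} * (n * t - (2 * t * s + h))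
    \<le> t * s * card {E \<in> biregular_graphs m n s t. H \<subseteq> E}"
proof -
  define A where "A = {E \<in> biregular_graphs m n s t. insert (i, j) H \<subseteq> E}"
  define B where "B = {E \<in> biregular_graphs m n s t. H \<subseteq> E}"
  define S where "S = (SIGMA E:A. switch_partners E i j H)"
  define T where "T = (SIGMA E:B. {a. (a, j) \<in> E} \<times> {b. (i, b) \<in> E})"
  have finA: "finite A" and finB: "finite B" using finite_biregular_graphs by (auto simp: A_def B_def)
  have finE: "finite E" if "E \<in> A \<union> B" for E
    using that biregular_graph_finite by (auto simp: A_def B_def)
  note partner = switch_partner_switch[OF _ _ ijH]
  have "n * t - (2 * t * s + h) \<le> card (switch_partners E i j H)" if "E \<in> A" for E
    using that by (intro card_switch_partners_ge[OF _ _ H]) (auto simp: A_def)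
  then have "card A * (n * t - (2 * t * s + h)) \<le> (\<Sum>E\<in>A. card (switch_partners E i j H))"
    using sum_bounded_below[of A "n * t - (2 * t * s + h)" "\<lambda>E. card (switch_partners E i j H)"]
    by simp
  also have "\<dots> = card S"
    unfolding S_def using finA finE
    by (intro card_SigmaI[symmetric]) (auto simp: switch_partners_def intro: finite_subset)
  also have "card S \<le> card T"
  proof (rule card_inj_on_le)
    have sw: "switchable E i j a b" if "(E, a, b) \<in> S" for E a b
      using partner(1) that by (auto simp: S_def A_def)
    show "inj_on (\<lambda>(E, a, b). (switch E i j a b, a, b)) S"
    proof (rule inj_onI)
      fix x y assume "x \<in> S" "y \<in> S"
        and eq: "(\<lambda>(E, a, b). (switch E i j a b, a, b)) x = (\<lambda>(E, a, b). (switch E i j a b, a, b)) y"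
      moreover obtain E a b E' a' b' where "x = (E, a, b)" "y = (E', a', b')" by (metis prod.exhaust)
      ultimately show "x = y" using switch_inj[OF sw sw, of E a b E'] by auto
    qed
    show "(\<lambda>(E, a, b). (switch E i j a b, a, b)) ` S \<subseteq> T"
    proof clarify
      fix E a b assume "(E, a, b) \<in> S"
      then have "E \<in> biregular_graphs m n s t" "insert (i, j) H \<subseteq> E" "(a, b) \<in> switch_partners E i j H"
        by (auto simp: S_def A_def)
      from partner(2-4)[OF this] show "(switch E i j a b, a, b) \<in> T" by (simp add: T_def B_def)
    qed
    show "finite T" unfolding T_def using finB finE
      by (intro finite_SigmaI finite_cartesian_product finite_row finite_col) auto
  qed
  also have "card T = (\<Sum>E\<in>B. card {a. (a, j) \<in> E} * card {b. (i, b) \<in> E})"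
    unfolding T_def using finB finE
    by (subst card_SigmaI) (auto simp: card_cartesian_product intro: finite_row finite_col)
  also have "\<dots> \<le> (\<Sum>E\<in>B. s * t)"
    unfolding B_def
    by (intro sum_mono mult_le_mono biregular_graphs_col_card_le biregular_graphs_row_card_le) auto
  finally show ?thesis by (simp add: A_def B_def mult.commute)
qed

definition switching_ratio :: "nat \<Rightarrow> nat \<Rightarrow> nat \<Rightarrow> nat \<Rightarrow> real" where
  "switching_ratio n s t h = real (t * s) / real (n * t - (2 * t * s + h))"

lemma card_containing_le:
  assumes "finite H" "card H \<le> h" and slack: "0 < n * t - (2 * t * s + h)"
  shows "real (card {E \<in> biregular_graphs m n s t. H \<subseteq> E})
    \<le> switching_ratio n s t h ^ card H * real (card (biregular_graphs m n s t))"
  using assms(1,2) unfolding switching_ratio_def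
proof (induction H rule: finite_induct)
  case (insert x H)
  obtain i j where x: "x = (i, j)" by fastforce
  define d where "d = real (n * t - (2 * t * s + h))"
  have d: "0 < d" using slack unfolding d_def by (simp only: of_nat_0_less_iff)
  have "real (card {E \<in> biregular_graphs m n s t. insert x H \<subseteq> E}) * d
      \<le> real (t * s) * real (card {E \<in> biregular_graphs m n s t. H \<subseteq> E})"
    using card_containing_insert_le[of i j H h m n s t] insert x unfolding d_def of_nat_mult[symmetric]
    by (simp only: of_nat_le_iff) simp
  also have "\<dots> \<le> real (t * s) * ((real (t * s) / d) ^ card H * real (card (biregular_graphs m n s t)))"
    using insert by (intro mult_left_mono) (simp_all add: d_def)
  finally have "real (card {E \<in> biregular_graphs m n s t. insert x H \<subseteq> E})
      \<le> real (t * s) / d * ((real (t * s) / d) ^ card H * real (card (biregular_graphs m n s t)))"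
    using d by (simp add: pos_le_divide_eq mult.commute)
  then show ?case using insert unfolding d_def[symmetric] by simp
qed simp

lemma bip_edges_eq_image: "bip_edges H = (\<lambda>(i, j). {Inl i, Inr j}) ` H"
  by (auto simp: bip_edges_def)

lemma inj_bip_edge: "inj (\<lambda>(i, j). {Inl i, Inr j} :: (nat + nat) set)"
  by (auto simp: inj_def doubleton_eq_iff)

lemma bip_edges_subset_iff: "bip_edges H \<subseteq> bip_edges E \<longleftrightarrow> H \<subseteq> E"
  unfolding bip_edges_eq_image using inj_bip_edge by (simp add: inj_image_subset_iff)

lemma card_bip_edges: "card (bip_edges H) = card H"
  unfolding bip_edges_eq_image using inj_bip_edge by (simp add: card_image inj_on_subset)

lemma subset_bip_edges_eq: "S \<subseteq> bip_edges E \<Longrightarrow> S = bip_edges {(i, j). {Inl i, Inr j} \<in> S}"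
  unfolding bip_edges_def by blast

lemma card_containing_edges_le:
  assumes S: "finite S" "card S \<le> h" and slack: "0 < n * t - (2 * t * s + h)"
  shows "real (card {E \<in> biregular_graphs m n s t. S \<subseteq> bip_edges E})
    \<le> switching_ratio n s t h ^ card S * real (card (biregular_graphs m n s t))"
proof (cases "\<exists>E \<in> biregular_graphs m n s t. S \<subseteq> bip_edges E")
  case True
  define H where "H = {(i, j). {Inl i, Inr j} \<in> S}"
  have SH: "S = bip_edges H" using True subset_bip_edges_eq by (auto simp: H_def)
  then have "{E \<in> biregular_graphs m n s t. S \<subseteq> bip_edges E} = {E \<in> biregular_graphs m n s t. H \<subseteq> E}"
    by (simp add: bip_edges_subset_iff)
  moreover have "finite H" using S(1) SH inj_bip_edge
    by (metis bip_edges_eq_image finite_imageD inj_on_subset subset_UNIV)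
  ultimately show ?thesis using card_containing_le[of H h n t s m] S slack SH
    by (simp add: card_bip_edges)
next
  case False
  then have "card {E \<in> biregular_graphs m n s t. S \<subseteq> bip_edges E} = 0"
    by (metis (no_types, lifting) card.empty empty_Collect_eq)
  then show ?thesis by (simp add: switching_ratio_def)
qed

section \<open>Breadth-first search trees\<close>

definition bip_adj :: "(nat \<times> nat) set \<Rightarrow> ((nat + nat) \<times> (nat + nat)) set" where
  "bip_adj E = adj_rel (bip_edges E)"

definition reachable :: "(nat \<times> nat) set \<Rightarrow> nat + nat \<Rightarrow> nat + nat \<Rightarrow> bool" where
  "reachable E v w \<longleftrightarrow> (\<exists>k. (v, w) \<in> bip_adj E ^^ k)"

definition graph_dist :: "(nat \<times> nat) set \<Rightarrow> nat + nat \<Rightarrow> nat + nat \<Rightarrow> nat" where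
  "graph_dist E v w = (LEAST k. (v, w) \<in> bip_adj E ^^ k)"

lemma bip_adj_iff:
  "(x, y) \<in> bip_adj E \<longleftrightarrow> (\<exists>i j. (i, j) \<in> E \<and> (x = Inl i \<and> y = Inr j \<or> x = Inr j \<and> y = Inl i))"
  by (auto simp: bip_adj_def adj_rel_def bip_edges_def doubleton_eq_iff)

lemma bip_adj_sym: "(x, y) \<in> bip_adj E \<Longrightarrow> (y, x) \<in> bip_adj E"
  by (auto simp: bip_adj_iff)

lemma bip_adj_isl: "(x, y) \<in> bip_adj E \<Longrightarrow> isl x \<noteq> isl y"
  by (auto simp: bip_adj_iff)

lemma relpow_bip_adj_parity: "(x, y) \<in> bip_adj E ^^ k \<Longrightarrow> isl x = isl y \<longleftrightarrow> even k"
proof (induction k arbitrary: y)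
  case (Suc k)
  then obtain z where "(x, z) \<in> bip_adj E ^^ k" "(z, y) \<in> bip_adj E" by (meson relpow_Suc_E)
  then show ?case using Suc.IH bip_adj_isl by fastforce
qed simp

lemma graph_dist_le: "(v, w) \<in> bip_adj E ^^ k \<Longrightarrow> graph_dist E v w \<le> k"
  unfolding graph_dist_def by (rule Least_le)

lemma relpow_graph_dist: "reachable E v w \<Longrightarrow> (v, w) \<in> bip_adj E ^^ graph_dist E v w"
  unfolding graph_dist_def reachable_def by (rule LeastI_ex)

lemma graph_dist_refl: "graph_dist E v v = 0"
  using graph_dist_le[where k = 0] by simp

lemma graph_dist_eq_0: "reachable E v w \<Longrightarrow> graph_dist E v w = 0 \<Longrightarrow> w = v"
  using relpow_graph_dist by fastforce

lemma reachable_step: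
  assumes "reachable E v w" "(w, x) \<in> bip_adj E"
  shows "reachable E v x" "graph_dist E v x \<le> Suc (graph_dist E v w)"
proof -
  have "(v, x) \<in> bip_adj E ^^ Suc (graph_dist E v w)"
    using relpow_graph_dist[OF assms(1)] assms(2) by auto
  then show "reachable E v x" "graph_dist E v x \<le> Suc (graph_dist E v w)"
    using graph_dist_le reachable_def by blast+
qed

text \<open>In a bipartite graph the distances from $v$ of two neighbours have different parity, so
  they differ by exactly one.\<close>

lemma graph_dist_adj:
  assumes w: "reachable E v w" and wx: "(w, x) \<in> bip_adj E"
  shows "graph_dist E v x = Suc (graph_dist E v w) \<or> graph_dist E v w = Suc (graph_dist E v x)"
proof -
  have x: "reachable E v x" using reachable_step[OF w wx] by simp
  have "isl w \<noteq> isl x" by (rule bip_adj_isl[OF wx])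
  then have "graph_dist E v w \<noteq> graph_dist E v x"
    using relpow_bip_adj_parity[OF relpow_graph_dist[OF w]] relpow_bip_adj_parity[OF relpow_graph_dist[OF x]]
    by auto
  then show ?thesis
    using reachable_step(2)[OF w wx] reachable_step(2)[OF x bip_adj_sym[OF wx]] by linarith
qed

definition bfs_preds :: "(nat \<times> nat) set \<Rightarrow> nat + nat \<Rightarrow> nat + nat \<Rightarrow> (nat + nat) set" where
  "bfs_preds E v w =
     {x. (x, w) \<in> bip_adj E \<and> reachable E v x \<and> Suc (graph_dist E v x) = graph_dist E v w}"

definition bfs_parent :: "(nat \<times> nat) set \<Rightarrow> nat + nat \<Rightarrow> nat + nat \<Rightarrow> nat + nat" where
  "bfs_parent E v w = (SOME x. x \<in> bfs_preds E v w)"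

lemma bfs_preds_edge: "x \<in> bfs_preds E v w \<Longrightarrow> {x, w} \<in> bip_edges E"
  by (auto simp: bfs_preds_def bip_adj_def adj_rel_def)

lemma bfs_preds_dist: "x \<in> bfs_preds E v w \<Longrightarrow> Suc (graph_dist E v x) = graph_dist E v w"
  by (simp add: bfs_preds_def)

lemma bfs_parent_in_preds:
  assumes w: "reachable E v w" and "w \<noteq> v"
  shows "bfs_parent E v w \<in> bfs_preds E v w"
proof -
  obtain k where k: "graph_dist E v w = Suc k"
    using graph_dist_eq_0[OF w] assms(2) not0_implies_Suc by blast
  then have "(v, w) \<in> bip_adj E ^^ Suc k" using relpow_graph_dist[OF w] by simp
  then obtain y where y: "(v, y) \<in> bip_adj E ^^ k" "(y, w) \<in> bip_adj E" by (meson relpow_Suc_E)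
  then have "reachable E v y" by (auto simp: reachable_def)
  moreover from this have "Suc (graph_dist E v y) = graph_dist E v w"
    using graph_dist_le[OF y(1)] graph_dist_adj[OF _ y(2)] k by fastforce
  ultimately have "y \<in> bfs_preds E v w" using y(2) by (simp add: bfs_preds_def)
  then show ?thesis unfolding bfs_parent_def by (rule someI)
qed

text \<open>Since the graph is bipartite, every edge of the ball joins some $y$ to a neighbour one level
  closer to $v$; the non-tree edges are those where this neighbour is not the BFS parent of $y$.\<close>

definition non_tree_edges :: "(nat \<times> nat) set \<Rightarrow> nat + nat \<Rightarrow> nat \<Rightarrow> (nat + nat) set set" where
  "non_tree_edges E v r = {{y, x} | y x. reachable E v y \<and> graph_dist E v y \<le> r
     \<and> x \<in> bfs_preds E v y \<and> x \<noteq> bfs_parent E v y}"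

lemma ball_verts_eq: "ball_verts (bip_edges E) v r = {w. reachable E v w \<and> graph_dist E v w \<le> r}"
proof (intro equalityI subsetI)
  fix w assume "w \<in> ball_verts (bip_edges E) v r"
  then obtain k where "k \<le> r" "(v, w) \<in> bip_adj E ^^ k"
    by (auto simp: ball_verts_def bip_adj_def)
  then show "w \<in> {w. reachable E v w \<and> graph_dist E v w \<le> r}"
    using graph_dist_le reachable_def by fastforce
next
  fix w assume "w \<in> {w. reachable E v w \<and> graph_dist E v w \<le> r}"
  then show "w \<in> ball_verts (bip_edges E) v r"
    using relpow_graph_dist unfolding ball_verts_def bip_adj_def by blast
qed

lemma ball_graph_iff:
  "f \<in> ball_graph E v r \<longleftrightarrow> f \<in> bip_edges E \<and> (\<forall>w\<in>f. reachable E v w \<and> graph_dist E v w \<le> r)"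
  by (auto simp: ball_graph_def induced_edges_def ball_verts_eq)

lemma bip_edges_other_end:
  assumes "f \<in> bip_edges E" "z \<in> f"
  obtains x where "f = {z, x}" "(x, z) \<in> bip_adj E"
  using assms by (auto simp: bip_edges_def bip_adj_iff insert_commute)

lemma edge_at_farthest_vertex:
  assumes F: "F \<subseteq> ball_graph E v r" and f: "f \<in> F" "z \<in> f"
    and far: "\<And>u. u \<in> \<Union>F \<Longrightarrow> graph_dist E v u \<le> graph_dist E v z"
  obtains x where "f = {z, x}" "x \<in> bfs_preds E v z"
proof -
  have fE: "f \<in> bip_edges E" and reach: "\<And>w. w \<in> f \<Longrightarrow> reachable E v w"
    using F f(1) by (auto simp: ball_graph_iff)
  obtain x where x: "f = {z, x}" "(x, z) \<in> bip_adj E" by (rule bip_edges_other_end[OF fE f(2)])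
  then have "x \<in> f" "x \<in> \<Union>F" using f(1) by auto
  have "graph_dist E v x = Suc (graph_dist E v z) \<or> graph_dist E v z = Suc (graph_dist E v x)"
    using graph_dist_adj[OF reach[OF f(2)] bip_adj_sym[OF x(2)]] .
  then have "Suc (graph_dist E v x) = graph_dist E v z" using far[OF \<open>x \<in> \<Union>F\<close>] by linarith
  then have "x \<in> bfs_preds E v z" using x(2) reach[OF \<open>x \<in> f\<close>] by (simp add: bfs_preds_def)
  with x(1) show ?thesis by (rule that)
qed

text \<open>A vertex $z$ of $F$ farthest from $v$ has at least two edges of $F$, and each of them leads to
  a neighbour one step closer to $v$; at most one of these is the BFS parent of $z$.\<close>

lemma even_degree_meets_non_tree_edges:
  assumes F: "F \<subseteq> ball_graph E v r" "finite F" "F \<noteq> {}"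
    and even: "\<And>z. even (card {f \<in> F. z \<in> f})"
  shows "F \<inter> non_tree_edges E v r \<noteq> {}"
proof -
  have FE: "f \<in> bip_edges E" if "f \<in> F" for f using F(1) that ball_graph_iff by blast
  have fin: "finite (\<Union>F)" using F(2) FE by (auto simp: bip_edges_def)
  have "\<Union>F \<noteq> {}"
  proof -
    obtain f where f: "f \<in> F" using F(3) by blast
    then obtain i j where "f = {Inl i, Inr j}" using FE[OF f] unfolding bip_edges_def by blast
    then show ?thesis using f by blast
  qed
  then have "Max (graph_dist E v ` \<Union>F) \<in> graph_dist E v ` \<Union>F" using fin by (intro Max_in) auto
  then obtain z where zmax: "Max (graph_dist E v ` \<Union>F) = graph_dist E v z" and z: "z \<in> \<Union>F"
    by (rule imageE)
  have far: "graph_dist E v u \<le> graph_dist E v z" if "u \<in> \<Union>F" for u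
    unfolding zmax[symmetric] using fin that by (intro Max_ge) auto
  define Fz where "Fz = {f \<in> F. z \<in> f}"
  have "finite Fz" using F(2) by (simp add: Fz_def)
  moreover have "Fz \<noteq> {}" using z by (auto simp: Fz_def)
  ultimately have "\<not> card Fz \<le> Suc 0" using even[of z] by (auto simp: Fz_def le_Suc_eq)
  then have "\<exists>f1\<in>Fz. \<exists>f2\<in>Fz. f1 \<noteq> f2" using card_le_Suc0_iff_eq[OF \<open>finite Fz\<close>] by blast
  then obtain f1 f2 where f12: "f1 \<in> F" "z \<in> f1" "f2 \<in> F" "z \<in> f2" "f1 \<noteq> f2"
    by (auto simp: Fz_def)
  obtain x1 where x1: "f1 = {z, x1}" "x1 \<in> bfs_preds E v z"
    using edge_at_farthest_vertex[OF F(1) f12(1,2) far] by blast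
  obtain x2 where x2: "f2 = {z, x2}" "x2 \<in> bfs_preds E v z"
    using edge_at_farthest_vertex[OF F(1) f12(3,4) far] by blast
  have "x1 \<noteq> x2" using x1(1) x2(1) f12(5) by blast
  then obtain f x where "f \<in> F" "f = {z, x}" "x \<in> bfs_preds E v z" "x \<noteq> bfs_parent E v z"
    using f12 x1 x2 by metis
  moreover have "reachable E v z" "graph_dist E v z \<le> r" using F(1) z by (auto simp: ball_graph_iff)
  ultimately have "f \<in> F \<inter> non_tree_edges E v r" unfolding non_tree_edges_def by blast
  then show ?thesis by blast
qed

section \<open>Cycles in a ball\<close>

lemma is_cycle_subset: "is_cycle F C \<Longrightarrow> C \<subseteq> F"
  by (auto simp: is_cycle_def)

lemma finite_cycle: "is_cycle F C \<Longrightarrow> finite C"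
  by (auto simp: is_cycle_def)

lemma cycle_nonempty: "is_cycle F C \<Longrightarrow> C \<noteq> {}"
  by (fastforce simp: is_cycle_def)

lemma cyclic_predecessor:
  fixes l k :: nat
  assumes l: "3 \<le> l" and k: "k < l"
  obtains p where "p < l" "(p + 1) mod l = k" "p \<noteq> k" "p \<noteq> (k + 1) mod l"
    "\<And>i. i < l \<Longrightarrow> (i + 1) mod l = k \<Longrightarrow> i = p"
proof -
  define p where "p = (if k = 0 then l - 1 else k - 1)"
  have "p < l" "(p + 1) mod l = k" "p \<noteq> k" using l k by (cases k; simp add: p_def)+
  moreover have "p \<noteq> (k + 1) mod l"
  proof (cases "k + 1 = l")
    case False
    then have "(k + 1) mod l = k + 1" using k by simp
    then show ?thesis using l by (cases k) (simp_all add: p_def)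
  qed (use l in \<open>simp add: p_def\<close>)
  moreover have "i = p" if "i < l" "(i + 1) mod l = k" for i
  proof (cases "i + 1 = l")
    case False
    then have "(i + 1) mod l = i + 1" using that(1) by simp
    then show ?thesis using that(2) by (simp add: p_def)
  qed (use that in \<open>simp add: p_def\<close>)
  ultimately show ?thesis by (rule that)
qed

lemma cycle_even_degree:
  assumes "is_cycle F C"
  shows "even (card {f \<in> C. z \<in> f})"
proof -
  obtain vs where l3: "length vs \<ge> 3" and dv: "distinct vs"
    and C: "C = {{vs ! i, vs ! ((i + 1) mod length vs)} | i. i < length vs}"
    using assms unfolding is_cycle_def by blast
  define l where "l = length vs"
  define e where "e i = {vs ! i, vs ! ((i + 1) mod l)}" for i
  have C': "C = e ` {..<l}" unfolding C e_def l_def by auto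
  have "0 < l" using l3 unfolding l_def by linarith
  then have succ: "(i + 1) mod l < l" for i by simp
  have nth_inj: "vs ! a = vs ! b \<longleftrightarrow> a = b" if "a < l" "b < l" for a b
    using dv that nth_eq_iff_index_eq l_def by blast
  show ?thesis
  proof (cases "z \<in> set vs")
    case False
    then have "{f \<in> C. z \<in> f} = {}" using succ by (auto simp: C' e_def l_def)
    then show ?thesis by (metis card.empty even_zero)
  next
    case True
    then obtain k where k: "k < l" "z = vs ! k" unfolding l_def by (auto simp: set_conv_nth)
    obtain p where p: "p < l" "(p + 1) mod l = k" "p \<noteq> k" "p \<noteq> (k + 1) mod l"
      and pred: "\<And>i. i < l \<Longrightarrow> (i + 1) mod l = k \<Longrightarrow> i = p"
      using cyclic_predecessor[OF l3[folded l_def] k(1)] by blast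
    have "{f \<in> C. z \<in> f} = {e p, e k}"
    proof (intro equalityI subsetI)
      fix f assume "f \<in> {f \<in> C. z \<in> f}"
      then obtain i where i: "i < l" "f = e i" "z \<in> e i" unfolding C' by auto
      then have "i = k \<or> (i + 1) mod l = k" using k nth_inj[of k] succ by (auto simp: e_def)
      then show "f \<in> {e p, e k}" using pred i by auto
    qed (use p k in \<open>auto simp: C' e_def\<close>)
    moreover have "e p \<noteq> e k"
    proof
      assume "e p = e k"
      then have "{vs ! p, vs ! k} = {vs ! k, vs ! ((k + 1) mod l)}" using p(2) by (simp add: e_def)
      then have "vs ! p = vs ! ((k + 1) mod l)" using nth_inj p(1,3) k(1) by (metis doubleton_eq_iff)
      then show False using nth_inj p(1,4) succ by simp
    qed
    ultimately show ?thesis by simp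
  qed
qed

lemma even_card_sym_diff:
  assumes "finite A" "finite B" "even (card A)" "even (card B)"
  shows "even (card ((A - B) \<union> (B - A)))"
proof -
  have "(A - B) \<union> (B - A) = (A \<union> B) - (A \<inter> B)" by blast
  moreover have "card (A \<union> B - A \<inter> B) = card (A \<union> B) - card (A \<inter> B)"
    using assms(1,2) by (intro card_Diff_subset) auto
  moreover have "card (A \<union> B) + card (A \<inter> B) = card A + card B"
    using card_Un_Int[OF assms(1,2)] by simp
  ultimately show ?thesis using assms(3,4) by presburger
qed

lemma cycle_meets_non_tree_edges:
  "is_cycle (ball_graph E v r) C \<Longrightarrow> C \<inter> non_tree_edges E v r \<noteq> {}"
  by (intro even_degree_meets_non_tree_edges is_cycle_subset finite_cycle cycle_nonempty
      cycle_even_degree)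

text \<open>The symmetric difference of two distinct cycles is a nonempty set of edges of even degree,
  so it contains a non-tree edge as well; this cannot be the non-tree edge lying on both cycles.\<close>

lemma two_cycles_two_non_tree_edges:
  assumes C: "is_cycle (ball_graph E v r) C" and C': "is_cycle (ball_graph E v r) C'"
    and "C \<noteq> C'"
  shows "\<exists>e1 \<in> non_tree_edges E v r. \<exists>e2 \<in> non_tree_edges E v r. e1 \<noteq> e2"
proof (rule ccontr)
  assume "\<not> ?thesis"
  then have one: "e1 = e2" if "e1 \<in> non_tree_edges E v r" "e2 \<in> non_tree_edges E v r" for e1 e2
    using that by blast
  obtain e0 where e0: "e0 \<in> C \<inter> C'" "e0 \<in> non_tree_edges E v r"
    using cycle_meets_non_tree_edges[OF C] cycle_meets_non_tree_edges[OF C'] one by blast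
  define D where "D = (C - C') \<union> (C' - C)"
  have "D \<subseteq> ball_graph E v r" "finite D" "D \<noteq> {}"
    using is_cycle_subset[OF C] is_cycle_subset[OF C'] finite_cycle[OF C] finite_cycle[OF C'] \<open>C \<noteq> C'\<close>
    by (auto simp: D_def)
  moreover have "even (card {f \<in> D. z \<in> f})" for z
  proof -
    have "{f \<in> D. z \<in> f} = ({f \<in> C. z \<in> f} - {f \<in> C'. z \<in> f}) \<union> ({f \<in> C'. z \<in> f} - {f \<in> C. z \<in> f})"
      unfolding D_def by blast
    then show ?thesis
      using finite_cycle[OF C] finite_cycle[OF C'] cycle_even_degree[OF C] cycle_even_degree[OF C']
      by (simp add: even_card_sym_diff)
  qed
  ultimately obtain e where "e \<in> D" "e \<in> non_tree_edges E v r"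
    using even_degree_meets_non_tree_edges by blast
  then show False using one e0 by (auto simp: D_def)
qed

definition bip_vertices :: "nat \<Rightarrow> nat \<Rightarrow> (nat + nat) set" where
  "bip_vertices n m = Inl ` {..<n} \<union> Inr ` {..<m}"

lemma finite_bip_vertices: "finite (bip_vertices n m)"
  by (simp add: bip_vertices_def)

lemma card_bip_vertices: "card (bip_vertices n m) = n + m"
  unfolding bip_vertices_def by (subst card_Un_disjoint) (auto simp: card_image)

lemma reachable_in_bip_vertices:
  assumes "E \<subseteq> {..<n} \<times> {..<m}" "v \<in> bip_vertices n m" "reachable E v w"
  shows "w \<in> bip_vertices n m"
proof -
  obtain k where k: "(v, w) \<in> bip_adj E ^^ k" using assms(3) by (auto simp: reachable_def)
  show ?thesis
  proof (cases k)
    case (Suc k')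
    then obtain y where "(y, w) \<in> bip_adj E" using k by (meson relpow_Suc_E)
    then show ?thesis using assms(1) by (auto simp: bip_adj_iff bip_vertices_def)
  qed (use k assms(2) in simp)
qed

definition bfs_ancestors :: "(nat \<times> nat) set \<Rightarrow> nat + nat \<Rightarrow> nat + nat \<Rightarrow> (nat + nat) set" where
  "bfs_ancestors E v w = (\<lambda>i. (bfs_parent E v ^^ i) w) ` {..graph_dist E v w}"

lemma bfs_parent_iter:
  assumes w: "reachable E v w" and "i \<le> graph_dist E v w"
  shows "reachable E v ((bfs_parent E v ^^ i) w)
    \<and> graph_dist E v ((bfs_parent E v ^^ i) w) = graph_dist E v w - i"
  using assms(2)
proof (induction i)
  case (Suc i)
  define u where "u = (bfs_parent E v ^^ i) w"
  have u: "reachable E v u" "graph_dist E v u = graph_dist E v w - i"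
    using Suc by (auto simp: u_def)
  then have "u \<noteq> v" using Suc.prems graph_dist_refl[of E v] by auto
  then have "bfs_parent E v u \<in> bfs_preds E v u" by (rule bfs_parent_in_preds[OF u(1)])
  then show ?case using u Suc.prems by (auto simp: bfs_preds_def u_def)
qed (simp add: w)

lemma self_in_bfs_ancestors: "w \<in> bfs_ancestors E v w"
  unfolding bfs_ancestors_def by (rule image_eqI[of _ _ 0]) auto

lemma root_in_bfs_ancestors:
  assumes "reachable E v w" shows "v \<in> bfs_ancestors E v w"
proof -
  have "(bfs_parent E v ^^ graph_dist E v w) w = v"
    using bfs_parent_iter[OF assms order_refl] graph_dist_eq_0 by auto
  then show ?thesis unfolding bfs_ancestors_def by (metis atMost_iff image_eqI order_refl)
qed

lemma card_bfs_ancestors_le: "card (bfs_ancestors E v w) \<le> Suc (graph_dist E v w)"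
  unfolding bfs_ancestors_def using card_image_le[of "{..graph_dist E v w}"] by simp

lemma bfs_ancestors_reachable:
  "reachable E v w \<Longrightarrow> u \<in> bfs_ancestors E v w \<Longrightarrow> reachable E v u"
  using bfs_parent_iter by (auto simp: bfs_ancestors_def)

lemma bfs_parent_in_ancestors:
  assumes w: "reachable E v w" and u: "u \<in> bfs_ancestors E v w" "u \<noteq> v"
  shows "bfs_parent E v u \<in> bfs_ancestors E v w"
proof -
  obtain i where i: "i \<le> graph_dist E v w" "u = (bfs_parent E v ^^ i) w"
    using u(1) by (auto simp: bfs_ancestors_def)
  then have "graph_dist E v u = graph_dist E v w - i" "reachable E v u"
    using bfs_parent_iter[OF w] by auto
  then have "Suc i \<le> graph_dist E v w" using graph_dist_eq_0 u(2) by fastforce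
  moreover have "bfs_parent E v u = (bfs_parent E v ^^ Suc i) w" using i by simp
  ultimately show ?thesis unfolding bfs_ancestors_def by blast
qed

lemma bfs_tree_edge:
  assumes "reachable E v w" "w \<noteq> v"
  shows "{w, bfs_parent E v w} \<in> bip_edges E"
  using bfs_preds_edge[OF bfs_parent_in_preds[OF assms]] by (simp add: insert_commute)

lemma inj_on_bfs_tree_edges:
  "inj_on (\<lambda>w. {w, bfs_parent E v w}) {w. reachable E v w \<and> w \<noteq> v}"
proof (rule inj_onI)
  fix w w' assume w: "w \<in> {w. reachable E v w \<and> w \<noteq> v}" and w': "w' \<in> {w. reachable E v w \<and> w \<noteq> v}"
    and eq: "{w, bfs_parent E v w} = {w', bfs_parent E v w'}"
  show "w = w'"
  proof (rule ccontr)
    assume "w \<noteq> w'"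
    then have "bfs_parent E v w' = w" "bfs_parent E v w = w'" using eq by (auto simp: doubleton_eq_iff)
    moreover have "Suc (graph_dist E v (bfs_parent E v u)) = graph_dist E v u"
      if "u \<in> {w. reachable E v w \<and> w \<noteq> v}" for u
      using that bfs_preds_dist[OF bfs_parent_in_preds] by simp
    ultimately show False using w w' by (metis Suc_n_not_le_n le_add2 plus_1_eq_Suc)
  qed
qed

lemma bfs_tree_edge_notin_non_tree_edges:
  assumes "reachable E v w" "w \<noteq> v"
  shows "{w, bfs_parent E v w} \<notin> non_tree_edges E v r"
proof
  assume "{w, bfs_parent E v w} \<in> non_tree_edges E v r"
  then obtain y x where yx: "{w, bfs_parent E v w} = {y, x}" "x \<in> bfs_preds E v y"
    "x \<noteq> bfs_parent E v y" by (auto simp: non_tree_edges_def)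
  have "Suc (graph_dist E v (bfs_parent E v w)) = graph_dist E v w"
    using bfs_preds_dist[OF bfs_parent_in_preds[OF assms]] .
  moreover have "Suc (graph_dist E v x) = graph_dist E v y" using bfs_preds_dist[OF yx(2)] .
  ultimately show False using yx(1,3) by (auto simp: doubleton_eq_iff)
qed

section \<open>Witnesses for non-tree edges\<close>

text \<open>A witness for $e$ non-tree edges at $v$ consists of a vertex set $W \ni v$ of size $p$, a
  parent map $f$ (a spanning tree of $W$) and $e$ further pairs $g\ k$; its edge set has exactly
  $p - 1 + e$ elements. Every graph with $e$ non-tree edges at $v$ contains the edges of such a
  witness with $p \<le> 2 e (r + 1)$, so a union bound over witnesses bounds the probability of
  having $e$ non-tree edges.\<close>

definition witness_edges :: "nat + nat \<Rightarrow> nat \<Rightarrow> (nat + nat) set \<Rightarrow> (nat + nat \<Rightarrow> nat + nat)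
    \<Rightarrow> (nat \<Rightarrow> (nat + nat) \<times> (nat + nat)) \<Rightarrow> (nat + nat) set set" where
  "witness_edges v e W f g = (\<lambda>w. {w, f w}) ` (W - {v}) \<union> (\<lambda>k. {fst (g k), snd (g k)}) ` {..<e}"

definition witnesses :: "nat \<Rightarrow> nat \<Rightarrow> nat + nat \<Rightarrow> nat \<Rightarrow> nat \<Rightarrow>
    ((nat + nat) set \<times> (nat + nat \<Rightarrow> nat + nat) \<times> (nat \<Rightarrow> (nat + nat) \<times> (nat + nat))) set" where
  "witnesses n m v e p = {(W, f, g). v \<in> W \<and> W \<subseteq> bip_vertices n m \<and> card W = p
     \<and> f \<in> (W - {v}) \<rightarrow>\<^sub>E W \<and> g \<in> {..<e} \<rightarrow>\<^sub>E W \<times> W \<and> card (witness_edges v e W f g) = p - 1 + e}"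

lemma finite_witness_edges: "finite W \<Longrightarrow> finite (witness_edges v e W f g)"
  by (simp add: witness_edges_def)

lemma witnesses_subset:
  "witnesses n m v e p \<subseteq> (SIGMA W:{W. v \<in> W \<and> W \<subseteq> bip_vertices n m \<and> card W = p}.
     ((W - {v}) \<rightarrow>\<^sub>E W) \<times> ({..<e} \<rightarrow>\<^sub>E W \<times> W))"
  by (auto simp: witnesses_def)

lemma finite_witnesses: "finite (witnesses n m v e p)"
proof (rule finite_subset[OF witnesses_subset])
  have "finite W" if "W \<subseteq> bip_vertices n m" for W
    using that finite_bip_vertices by (rule finite_subset)
  then show "finite (SIGMA W:{W. v \<in> W \<and> W \<subseteq> bip_vertices n m \<and> card W = p}.
      ((W - {v}) \<rightarrow>\<^sub>E W) \<times> ({..<e} \<rightarrow>\<^sub>E W \<times> W))"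
    using finite_bip_vertices by (intro finite_SigmaI finite_cartesian_product finite_PiE) auto
qed

lemma card_subsets_containing:
  assumes V: "finite V" "v \<in> V" and p: "1 \<le> p"
  shows "card {W. v \<in> W \<and> W \<subseteq> V \<and> card W = p} = (card V - 1) choose (p - 1)"
proof -
  define A where "A = {W. v \<in> W \<and> W \<subseteq> V \<and> card W = p}"
  define B where "B = {B. B \<subseteq> V - {v} \<and> card B = p - 1}"
  have "bij_betw (\<lambda>W. W - {v}) A B"
  proof (rule bij_betwI[of _ _ _ "insert v"])
    show "(\<lambda>W. W - {v}) \<in> A \<rightarrow> B"
    proof
      fix W assume W: "W \<in> A"
      then have "finite W" using V(1) by (auto simp: A_def intro: finite_subset)
      then show "W - {v} \<in> B" using W by (auto simp: A_def B_def)
    qed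
    show "insert v \<in> B \<rightarrow> A"
    proof
      fix C assume C: "C \<in> B"
      then have "finite C" "v \<notin> C" using V(1) by (auto simp: B_def intro: finite_subset)
      then show "insert v C \<in> A" using C V(2) p by (auto simp: A_def B_def)
    qed
    show "insert v (W - {v}) = W" if "W \<in> A" for W using that by (auto simp: A_def)
    show "insert v C - {v} = C" if "C \<in> B" for C using that by (auto simp: B_def)
  qed
  then have "card A = card B" by (rule bij_betw_same_card)
  also have "\<dots> = (card V - 1) choose (p - 1)"
    using V by (simp add: B_def n_subsets card_Diff_singleton)
  finally show ?thesis by (simp add: A_def)
qed

lemma card_witnesses_le:
  assumes v: "v \<in> bip_vertices n m" and p: "1 \<le> p"
  shows "card (witnesses n m v e p) \<le> ((n + m - 1) choose (p - 1)) * p ^ (p - 1) * (p * p) ^ e"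
proof -
  define Ws where "Ws = {W. v \<in> W \<and> W \<subseteq> bip_vertices n m \<and> card W = p}"
  define T where "T W = ((W - {v}) \<rightarrow>\<^sub>E W) \<times> ({..<e} \<rightarrow>\<^sub>E W \<times> W)" for W
  have finWs: "finite Ws" using finite_bip_vertices by (simp add: Ws_def)
  have W: "finite W" "card W = p" "v \<in> W" if "W \<in> Ws" for W
    using that finite_bip_vertices by (auto simp: Ws_def intro: finite_subset)
  have finT: "finite (T W)" if "W \<in> Ws" for W
    using W[OF that] by (simp add: T_def finite_PiE)
  have "witnesses n m v e p \<subseteq> Sigma Ws T" unfolding Ws_def T_def by (rule witnesses_subset)
  then have "card (witnesses n m v e p) \<le> card (Sigma Ws T)"
    using finWs finT by (intro card_mono finite_SigmaI)
  also have "\<dots> = (\<Sum>W\<in>Ws. card (T W))" using finWs finT by (simp add: card_SigmaI)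
  also have "\<dots> = (\<Sum>W\<in>Ws. p ^ (p - 1) * (p * p) ^ e)"
  proof (rule sum.cong[OF refl])
    fix W assume "W \<in> Ws"
    note W = W[OF this]
    have "card ((W - {v}) \<rightarrow>\<^sub>E W) = p ^ (p - 1)" using W by (simp add: card_PiE)
    moreover have "card ({..<e} \<rightarrow>\<^sub>E W \<times> W) = (p * p) ^ e"
      using W by (simp add: card_PiE card_cartesian_product)
    ultimately show "card (T W) = p ^ (p - 1) * (p * p) ^ e" by (simp add: T_def card_cartesian_product)
  qed
  also have "\<dots> = card Ws * (p ^ (p - 1) * (p * p) ^ e)" by simp
  also have "card Ws = (n + m - 1) choose (p - 1)"
    using card_subsets_containing[OF finite_bip_vertices v p] by (simp add: Ws_def card_bip_vertices)
  finally show ?thesis by (simp add: mult.assoc)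
qed


lemma union_bfs_ancestors:
  assumes Y: "finite Y" "Y \<noteq> {}" "\<And>y. y \<in> Y \<Longrightarrow> reachable E v y \<and> graph_dist E v y \<le> r"
    and W: "W = (\<Union>y\<in>Y. bfs_ancestors E v y)"
  shows "v \<in> W" "Y \<subseteq> W" "finite W" "card W \<le> card Y * (r + 1)"
    "\<And>w. w \<in> W \<Longrightarrow> reachable E v w" "\<And>w. w \<in> W \<Longrightarrow> w \<noteq> v \<Longrightarrow> bfs_parent E v w \<in> W"
proof -
  show "v \<in> W" using Y root_in_bfs_ancestors by (auto simp: W)
  show "Y \<subseteq> W" using self_in_bfs_ancestors by (auto simp: W)
  show "finite W" using Y(1) by (simp add: W bfs_ancestors_def)
  have "card W \<le> (\<Sum>y\<in>Y. card (bfs_ancestors E v y))" unfolding W by (rule card_UN_le[OF Y(1)])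
  also have "\<dots> \<le> (\<Sum>y\<in>Y. r + 1)"
    using Y(3) card_bfs_ancestors_le by (intro sum_mono) (fastforce intro: order_trans)
  finally show "card W \<le> card Y * (r + 1)" by simp
  show "reachable E v w" if "w \<in> W" for w
  proof -
    obtain y where "y \<in> Y" "w \<in> bfs_ancestors E v y" using \<open>w \<in> W\<close> by (auto simp: W)
    then show ?thesis using Y(3) bfs_ancestors_reachable by blast
  qed
  show "bfs_parent E v w \<in> W" if "w \<in> W" "w \<noteq> v" for w
  proof -
    obtain y where y: "y \<in> Y" "w \<in> bfs_ancestors E v y" using \<open>w \<in> W\<close> by (auto simp: W)
    then have "bfs_parent E v w \<in> bfs_ancestors E v y"
      using bfs_parent_in_ancestors Y(3) \<open>w \<noteq> v\<close> by blast
    then show ?thesis using y(1) by (auto simp: W)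
  qed
qed

lemma bfs_tree_edges_within:
  assumes W: "finite W" "v \<in> W" "\<And>w. w \<in> W \<Longrightarrow> reachable E v w"
  shows "card ((\<lambda>w. {w, bfs_parent E v w}) ` (W - {v})) = card W - 1"
    "(\<lambda>w. {w, bfs_parent E v w}) ` (W - {v}) \<subseteq> bip_edges E"
    "(\<lambda>w. {w, bfs_parent E v w}) ` (W - {v}) \<inter> non_tree_edges E v r = {}"
proof -
  have "inj_on (\<lambda>w. {w, bfs_parent E v w}) (W - {v})"
    by (rule inj_on_subset[OF inj_on_bfs_tree_edges]) (use W(3) in blast)
  then show "card ((\<lambda>w. {w, bfs_parent E v w}) ` (W - {v})) = card W - 1"
    using W(1,2) by (simp add: card_image card_Diff_singleton)
  show "(\<lambda>w. {w, bfs_parent E v w}) ` (W - {v}) \<subseteq> bip_edges E"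
    using bfs_tree_edge W(3) by auto
  show "(\<lambda>w. {w, bfs_parent E v w}) ` (W - {v}) \<inter> non_tree_edges E v r = {}"
  proof (rule equals0I)
    fix x assume "x \<in> (\<lambda>w. {w, bfs_parent E v w}) ` (W - {v}) \<inter> non_tree_edges E v r"
    then obtain w where "w \<in> W" "w \<noteq> v" "{w, bfs_parent E v w} \<in> non_tree_edges E v r" by auto
    then show False using bfs_tree_edge_notin_non_tree_edges W(3) by blast
  qed
qed

lemma enumerate_non_tree_edges:
  assumes X: "X \<subseteq> non_tree_edges E v r" "finite X"
  obtains ys where "bij_betw (\<lambda>k. {fst (ys k), snd (ys k)}) {..<card X} X"
    "\<And>k. k < card X \<Longrightarrow> reachable E v (fst (ys k)) \<and> graph_dist E v (fst (ys k)) \<le> r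
      \<and> snd (ys k) \<in> bfs_preds E v (fst (ys k))"
proof -
  obtain h where h: "bij_betw h {..<card X} X"
    using ex_bij_betw_nat_finite[OF X(2)] by (auto simp: atLeast0LessThan)
  define Q where "Q k yx \<longleftrightarrow> h k = {fst yx, snd yx} \<and> reachable E v (fst yx)
    \<and> graph_dist E v (fst yx) \<le> r \<and> snd yx \<in> bfs_preds E v (fst yx)" for k yx
  define ys where "ys k = (SOME yx. Q k yx)" for k
  have ys: "Q k (ys k)" if k: "k < card X" for k
  proof -
    have "h k \<in> non_tree_edges E v r" using h X(1) k by (auto simp: bij_betw_def)
    then obtain y x where "h k = {y, x}" "reachable E v y" "graph_dist E v y \<le> r" "x \<in> bfs_preds E v y"
      unfolding non_tree_edges_def by blast
    then have "Q k (y, x)" by (simp add: Q_def)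
    then show ?thesis unfolding ys_def by (rule someI)
  qed
  have "bij_betw (\<lambda>k. {fst (ys k), snd (ys k)}) {..<card X} X"
    using h by (rule bij_betw_cong[THEN iffD1, rotated]) (simp add: ys[unfolded Q_def])
  moreover have "reachable E v (fst (ys k)) \<and> graph_dist E v (fst (ys k)) \<le> r
      \<and> snd (ys k) \<in> bfs_preds E v (fst (ys k))" if "k < card X" for k
    using ys[OF that] by (simp add: Q_def)
  ultimately show ?thesis by (rule that)
qed

lemma non_tree_edges_witness:
  assumes E: "E \<subseteq> {..<n} \<times> {..<m}" and v: "v \<in> bip_vertices n m"
    and X: "X \<subseteq> non_tree_edges E v r" "finite X" "X \<noteq> {}"
  shows "\<exists>p W f g. 1 \<le> p \<and> p \<le> 2 * card X * (r + 1) \<and> (W, f, g) \<in> witnesses n m v (card X) p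
    \<and> witness_edges v (card X) W f g \<subseteq> bip_edges E"
proof -
  define e where "e = card X"
  obtain ys where ys: "bij_betw (\<lambda>k. {fst (ys k), snd (ys k)}) {..<e} X"
    and ys_ball: "\<And>k. k < e \<Longrightarrow> reachable E v (fst (ys k)) \<and> graph_dist E v (fst (ys k)) \<le> r
      \<and> snd (ys k) \<in> bfs_preds E v (fst (ys k))"
    using enumerate_non_tree_edges[OF X(1,2)] unfolding e_def by blast
  define Y where "Y = fst ` ys ` {..<e} \<union> snd ` ys ` {..<e}"
  have "e \<noteq> 0" using X by (simp add: e_def)
  then have Y: "finite Y" "Y \<noteq> {}" by (auto simp: Y_def)
  have Y_ball: "reachable E v u \<and> graph_dist E v u \<le> r" if u: "u \<in> Y" for u
  proof -
    obtain k where k: "k < e" "u = fst (ys k) \<or> u = snd (ys k)" using u by (auto simp: Y_def)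
    then show ?thesis using ys_ball[OF k(1)] by (auto simp: bfs_preds_def)
  qed
  define W where "W = (\<Union>u\<in>Y. bfs_ancestors E v u)"
  note W = union_bfs_ancestors[OF Y Y_ball W_def]
  note T = bfs_tree_edges_within[OF W(3,1,5)]
  define f where "f = restrict (bfs_parent E v) (W - {v})"
  define g where "g = restrict ys {..<e}"
  have "(\<lambda>w. {w, f w}) ` (W - {v}) = (\<lambda>w. {w, bfs_parent E v w}) ` (W - {v})"
    unfolding f_def by (rule image_cong) auto
  moreover have "(\<lambda>k. {fst (g k), snd (g k)}) ` {..<e} = X"
    using bij_betw_imp_surj_on[OF ys] unfolding g_def by auto
  ultimately have edges: "witness_edges v e W f g = (\<lambda>w. {w, bfs_parent E v w}) ` (W - {v}) \<union> X"
    by (simp add: witness_edges_def)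
  have "card Y \<le> card ((fst \<circ> ys) ` {..<e}) + card ((snd \<circ> ys) ` {..<e})"
    unfolding Y_def image_comp by (rule card_Un_le)
  also have "\<dots> \<le> e + e" using card_image_le[of "{..<e}"] by (intro add_mono) auto
  finally have "card W \<le> 2 * e * (r + 1)"
    using W(4) mult_le_mono1[of "card Y" "2 * e" "r + 1"] by linarith
  moreover have "card (witness_edges v e W f g) = card W - 1 + e"
  proof -
    have "(\<lambda>w. {w, bfs_parent E v w}) ` (W - {v}) \<inter> X = {}" using T(3)[of r] X(1) by blast
    then show ?thesis using T(1) X(2) W(3) unfolding edges by (simp add: card_Un_disjoint e_def)
  qed
  moreover have "W \<subseteq> bip_vertices n m" using W(5) reachable_in_bip_vertices[OF E v] by blast
  moreover have "f \<in> (W - {v}) \<rightarrow>\<^sub>E W" using W(6) by (simp add: f_def)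
  moreover have "g \<in> {..<e} \<rightarrow>\<^sub>E W \<times> W"
    using W(2) by (auto simp: g_def Y_def mem_Times_iff image_subset_iff)
  moreover have "X \<subseteq> bip_edges E"
  proof
    fix x assume "x \<in> X"
    then obtain k where "k < e" "x = {fst (ys k), snd (ys k)}"
      using bij_betw_imp_surj_on[OF ys] by auto
    then show "x \<in> bip_edges E" using bfs_preds_edge ys_ball by (metis insert_commute)
  qed
  then have "witness_edges v e W f g \<subseteq> bip_edges E" using T(2) by (simp add: edges)
  moreover have "1 \<le> card W" using W(1,3) by (metis One_nat_def Suc_leI card_gt_0_iff empty_iff)
  ultimately show ?thesis using W(1) unfolding e_def witnesses_def by blast
qed

lemma card_graphs_with_witness_le:
  assumes S: "S \<subseteq> biregular_graphs m n s t"
    and witness: "\<And>E. E \<in> S \<Longrightarrow> \<exists>p W f g. 1 \<le> p \<and> p \<le> P \<and> (W, f, g) \<in> witnesses n m v e p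
      \<and> witness_edges v e W f g \<subseteq> bip_edges E"
    and h: "P - 1 + e \<le> h" and slack: "0 < n * t - (2 * t * s + h)"
  shows "real (card S) \<le> (\<Sum>p = 1..P. real (card (witnesses n m v e p)) * switching_ratio n s t h ^ (p - 1 + e))
    * real (card (biregular_graphs m n s t))"
proof -
  define G where "G = biregular_graphs m n s t"
  define Ev where "Ev \<sigma> = {E \<in> G. witness_edges v e (fst \<sigma>) (fst (snd \<sigma>)) (snd (snd \<sigma>)) \<subseteq> bip_edges E}"
    for \<sigma>
  have "S \<subseteq> (\<Union>p\<in>{1..P}. \<Union>\<sigma>\<in>witnesses n m v e p. Ev \<sigma>)"
  proof
    fix E assume E: "E \<in> S"
    then obtain p W f g where "p \<in> {1..P}" "(W, f, g) \<in> witnesses n m v e p"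
      "witness_edges v e W f g \<subseteq> bip_edges E" using witness by fastforce
    moreover from this have "E \<in> Ev (W, f, g)" using E S by (auto simp: Ev_def G_def)
    ultimately show "E \<in> (\<Union>p\<in>{1..P}. \<Union>\<sigma>\<in>witnesses n m v e p. Ev \<sigma>)" by blast
  qed
  moreover have "finite (\<Union>p\<in>{1..P}. \<Union>\<sigma>\<in>witnesses n m v e p. Ev \<sigma>)"
    by (rule finite_subset[OF _ finite_biregular_graphs]) (auto simp: Ev_def G_def)
  ultimately have "card S \<le> card (\<Union>p\<in>{1..P}. \<Union>\<sigma>\<in>witnesses n m v e p. Ev \<sigma>)"
    by (rule card_mono[rotated])
  also have "\<dots> \<le> (\<Sum>p = 1..P. \<Sum>\<sigma>\<in>witnesses n m v e p. card (Ev \<sigma>))"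
    by (intro order_trans[OF card_UN_le] sum_mono card_UN_le finite_witnesses) simp
  finally have "real (card S) \<le> (\<Sum>p = 1..P. \<Sum>\<sigma>\<in>witnesses n m v e p. real (card (Ev \<sigma>)))"
    by (simp add: of_nat_mono[of "card S", simplified] flip: of_nat_sum)
  also have "\<dots> \<le> (\<Sum>p = 1..P. \<Sum>\<sigma>\<in>witnesses n m v e p. switching_ratio n s t h ^ (p - 1 + e) * real (card G))"
  proof (intro sum_mono)
    fix p \<sigma> assume p: "p \<in> {1..P}" and \<sigma>: "\<sigma> \<in> witnesses n m v e p"
    obtain W f g where \<sigma>W: "\<sigma> = (W, f, g)" by (metis prod.exhaust)
    have W: "W \<subseteq> bip_vertices n m" "card (witness_edges v e W f g) = p - 1 + e"
      using \<sigma> by (auto simp: \<sigma>W witnesses_def)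
    then have "finite (witness_edges v e W f g)"
      using finite_bip_vertices by (metis finite_subset finite_witness_edges)
    moreover have "card (witness_edges v e W f g) \<le> h" using W(2) p h by auto
    ultimately show "real (card (Ev \<sigma>)) \<le> switching_ratio n s t h ^ (p - 1 + e) * real (card G)"
      using card_containing_edges_le[OF _ _ slack, of "witness_edges v e W f g" m] W(2)
      by (simp add: Ev_def G_def \<sigma>W)
  qed
  also have "\<dots> = (\<Sum>p = 1..P. real (card (witnesses n m v e p)) * switching_ratio n s t h ^ (p - 1 + e))
      * real (card G)"
    by (simp add: sum_distrib_right mult.assoc)
  finally show ?thesis by (simp add: G_def)
qed

section \<open>The first moment bound\<close>

lemma power_div_fact_le_exp:
  assumes "0 \<le> (x::real)"
  shows "x ^ n / fact n \<le> exp x"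
proof -
  have "x ^ n / fact n \<le> (\<Sum>k\<le>n. x ^ k / fact k)"
    by (rule member_le_sum) (use assms in auto)
  also have "\<dots> \<le> exp x"
    using assms summable_exp_generic[of x]
    by (auto simp: exp_def divide_inverse ac_simps intro!: sum_le_suminf)
  finally show ?thesis .
qed

lemma binomial_mult_power_le:
  assumes "1 \<le> p"
  shows "real ((N - 1) choose (p - 1)) * real p ^ (p - 1) \<le> real N ^ (p - 1) * exp (real p)"
proof -
  define k where "k = p - 1"
  have p: "p = Suc k" using assms by (simp add: k_def)
  have "real ((N - 1) choose k) * fact k \<le> real ((N - 1) ^ k)"
    using binomial_fact_pow[of "N - 1" k] by (metis of_nat_fact of_nat_le_iff of_nat_mult)
  also have "\<dots> \<le> real N ^ k" by (simp add: power_mono)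
  finally have binom: "real ((N - 1) choose k) \<le> real N ^ k / fact k" by (simp add: field_simps)
  have "real p ^ k / fact k = real p ^ p / fact p" by (simp add: p)
  also have "\<dots> \<le> exp (real p)" by (rule power_div_fact_le_exp) simp
  finally have exp: "real p ^ k / fact k \<le> exp (real p)" .
  have "real ((N - 1) choose k) * real p ^ k \<le> real N ^ k / fact k * real p ^ k"
    by (rule mult_right_mono[OF binom]) simp
  also have "\<dots> = real N ^ k * (real p ^ k / fact k)" by simp
  also have "\<dots> \<le> real N ^ k * exp (real p)" by (rule mult_left_mono[OF exp]) simp
  finally show ?thesis by (simp add: k_def)
qed

lemma exp_mult_power_le:
  assumes "4 \<le> s"
  shows "exp (real P) * (4 * real s) ^ P \<le> real s ^ (3 * P)"
proof -
  have "exp (real P) = exp 1 ^ P" using exp_of_nat_mult[of P 1] by simp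
  then have "exp (real P) * (4 * real s) ^ P = (4 * exp 1 * real s) ^ P"
    by (simp add: power_mult_distrib)
  also have "\<dots> \<le> (real s ^ 3) ^ P"
  proof (rule power_mono)
    have "4 * exp 1 * real s \<le> 4 * 3 * real s" using exp_le by (intro mult_right_mono) auto
    also have "\<dots> \<le> real s * real s * real s"
      using assms mult_mono[of 4 "real s" 4 "real s"] by (intro mult_right_mono) auto
    finally show "4 * exp 1 * real s \<le> real s ^ 3" by (simp add: power3_eq_cube)
  qed simp
  finally show ?thesis by (simp add: power_mult)
qed

text \<open>A witness with $p$ vertices has $p - 1 + e$ edges, and there are at most
  $(n + m)^{p - 1} e^p p^{2 e}$ of them; as $(n + m) q \<le> 4 s$, the terms are bounded uniformly
  in $p \<le> P$.\<close>

lemma witness_sum_le: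
  assumes v: "v \<in> bip_vertices n m" and q: "0 \<le> q" "real (n + m) * q \<le> 4 * real s"
    and s: "1 \<le> s"
  shows "(\<Sum>p = 1..P. real (card (witnesses n m v e p)) * q ^ (p - 1 + e))
    \<le> real P * (exp (real P) * (4 * real s) ^ P * real P ^ (2 * e) * q ^ e)"
proof -
  have "real (card (witnesses n m v e p)) * q ^ (p - 1 + e)
      \<le> exp (real P) * (4 * real s) ^ P * real P ^ (2 * e) * q ^ e" if p: "p \<in> {1..P}" for p
  proof -
    have "(p * p) ^ e = p ^ (2 * e)" by (simp add: power_mult_distrib mult_2 power_add)
    then have "card (witnesses n m v e p) \<le> ((n + m - 1) choose (p - 1)) * p ^ (p - 1) * p ^ (2 * e)"
      using card_witnesses_le[OF v, of p e] p by simp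
    then have "real (card (witnesses n m v e p))
        \<le> real ((n + m - 1) choose (p - 1)) * real p ^ (p - 1) * real p ^ (2 * e)"
      by (metis of_nat_le_iff of_nat_mult of_nat_power)
    also have "\<dots> \<le> real (n + m) ^ (p - 1) * exp (real p) * real p ^ (2 * e)"
      using binomial_mult_power_le[of p "n + m"] p by (intro mult_right_mono) auto
    finally have "real (card (witnesses n m v e p)) * q ^ (p - 1 + e)
        \<le> real (n + m) ^ (p - 1) * exp (real p) * real p ^ (2 * e) * q ^ (p - 1 + e)"
      using q(1) by (intro mult_right_mono) auto
    also have "\<dots> = (real (n + m) * q) ^ (p - 1) * exp (real p) * real p ^ (2 * e) * q ^ e"
      by (simp add: power_add power_mult_distrib)
    also have "\<dots> \<le> (4 * real s) ^ P * exp (real P) * real P ^ (2 * e) * q ^ e"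
    proof -
      have "(real (n + m) * q) ^ (p - 1) \<le> (4 * real s) ^ (p - 1)"
        using q by (intro power_mono) auto
      also have "\<dots> \<le> (4 * real s) ^ P" using p s by (intro power_increasing) auto
      finally have "(real (n + m) * q) ^ (p - 1) \<le> (4 * real s) ^ P" .
      moreover have "exp (real p) \<le> exp (real P)" using p by simp
      moreover have "real p ^ (2 * e) \<le> real P ^ (2 * e)" using p by (intro power_mono) auto
      ultimately show ?thesis using q(1) by (intro mult_mono) (auto simp: zero_le_mult_iff)
    qed
    finally show ?thesis by (simp add: mult_ac)
  qed
  then have "(\<Sum>p = 1..P. real (card (witnesses n m v e p)) * q ^ (p - 1 + e))
      \<le> (\<Sum>p = 1..P. exp (real P) * (4 * real s) ^ P * real P ^ (2 * e) * q ^ e)"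
    by (rule sum_mono)
  then show ?thesis by simp
qed

lemma prob_ge_if_card_bad_le:
  assumes G: "finite G" "G \<noteq> {}" and bad: "Bad \<subseteq> G" "real (card Bad) \<le> \<beta> * real (card G)"
    and good: "\<And>E. E \<in> G \<Longrightarrow> E \<notin> Bad \<Longrightarrow> E \<in> A"
  shows "1 - \<beta> \<le> measure_pmf.prob (pmf_of_set G) A"
proof -
  have "card (G - Bad) \<le> card (G \<inter> A)" using G(1) good by (intro card_mono) auto
  moreover have "card (G - Bad) = card G - card Bad" using bad(1) G(1) by (simp add: card_Diff_subset finite_subset)
  moreover have "card Bad \<le> card G" using bad(1) G(1) by (simp add: card_mono)
  ultimately have "real (card G) - \<beta> * real (card G) \<le> real (card (G \<inter> A))"
    using bad(2) by linarith
  moreover have "0 < real (card G)" using G by (simp add: card_gt_0_iff)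
  ultimately have "1 - \<beta> \<le> real (card (G \<inter> A)) / real (card G)" by (simp add: field_simps)
  also have "\<dots> = measure_pmf.prob (pmf_of_set G) A" using measure_pmf_of_set[OF G(2,1)] by simp
  finally show ?thesis .
qed

lemma tendsto_one_if_lower_bound:
  assumes N: "filterlim N at_top sequentially" and B: "(B \<longlongrightarrow> 0) at_top"
    and large: "eventually P at_top"
    and lower: "\<And>k. P (real (N k)) \<Longrightarrow> 1 - B (real (N k)) \<le> f k" and upper: "\<And>k. f k \<le> (1::real)"
  shows "f \<longlonglongrightarrow> 1"
proof (rule tendsto_sandwich[of "\<lambda>k. 1 - B (real (N k))" f _ "\<lambda>_. 1"])
  have N': "filterlim (\<lambda>k. real (N k)) at_top sequentially"
    by (rule filterlim_compose[OF filterlim_real_sequentially N])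
  show "eventually (\<lambda>k. 1 - B (real (N k)) \<le> f k) sequentially"
    using eventually_compose_filterlim[OF large N'] by eventually_elim (rule lower)
  show "eventually (\<lambda>k. f k \<le> 1) sequentially" using upper by simp
  have "((\<lambda>k. B (real (N k))) \<longlongrightarrow> 0) sequentially" by (rule filterlim_compose[OF B N'])
  then show "((\<lambda>k. 1 - B (real (N k))) \<longlongrightarrow> 1) sequentially"
    using tendsto_diff[OF tendsto_const, of _ 0 sequentially 1] by simp
qed simp


lemma power_le_powr_if_mult_ln_le:
  assumes "0 < x" "0 < y" "real k * ln x \<le> c * ln y"
  shows "x ^ k \<le> y powr c"
proof -
  have "x ^ k = exp (real k * ln x)" using assms(1) by (simp add: exp_of_nat_mult)
  also have "\<dots> \<le> exp (c * ln y)" using assms(3) by simp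
  also have "\<dots> = y powr c" using assms(2) by (simp add: powr_def)
  finally show ?thesis .
qed

text \<open>The first moment bound for the event that the ball around a fixed vertex has $e$ non-tree
  edges, as a function of the number $x$ of left vertices.\<close>

definition excess_bound :: "nat \<Rightarrow> real \<Rightarrow> real" where
  "excess_bound e x = 2 ^ e * (8 * real e * ln x) ^ (2 * e + 1) * sqrt x / x ^ e"

lemma excess_bound_nonneg: "1 \<le> x \<Longrightarrow> 0 \<le> excess_bound e x"
  by (simp add: excess_bound_def)

section \<open>The regime of the theorem\<close>

text \<open>The assumption \<open>n_large\<close> holds for all large $n$; it makes the slack
  $n t - (2 t s + h)$ of the switching argument at least $n t / 2$.\<close>

locale biregular_parameters =
  fixes \<alpha> :: real and n m s t L :: nat
  assumes alpha: "0 < \<alpha>" "\<alpha> < 1"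
    and m_eq: "real m = \<alpha> * real n" and t_eq: "real t = \<alpha> * real s" and t_ge_3: "3 \<le> t"
    and L_ge_1: "1 \<le> L" and L_le: "real L \<le> 1/100 * ln (real m) / ln (real (t * s))"
    and n_large: "2 * real n powr (1/100) + 18 * ln (real n) \<le> real n"
begin

lemma t_less_s: "t < s"
proof -
  have "0 < real s" using t_eq t_ge_3 by (cases "s = 0") auto
  then have "\<alpha> * real s < real s" using alpha by simp
  then show ?thesis using t_eq by simp
qed

lemma s_ge_4: "4 \<le> s"
  using t_less_s t_ge_3 by simp

lemma n_mult_t: "n * t = m * s"
proof -
  have "real (n * t) = real (m * s)" using m_eq t_eq by simp
  then show ?thesis by (simp only: of_nat_eq_iff)
qed

lemma m_le_n: "m \<le> n"
proof -
  have "\<alpha> * real n \<le> real n" using alpha by (intro mult_left_le_one_le) auto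
  then show ?thesis using m_eq by simp
qed

lemma ln_ts_gt_1: "1 < ln (real (t * s))"
proof -
  have "12 \<le> t * s" using mult_le_mono[OF t_ge_3 s_ge_4] by simp
  then have "exp 1 < real (t * s)" using exp_le by linarith
  then show ?thesis using exp_gt_zero less_trans ln_less_cancel_iff by (metis ln_exp)
qed

lemma L_mult_ln_ts_le: "real L * ln (real (t * s)) \<le> 1/100 * ln (real m)"
  using L_le ln_ts_gt_1 by (simp add: pos_le_divide_eq)

lemma m_gt_1: "1 < real m"
proof -
  have "0 < real L * ln (real (t * s))" using L_ge_1 ln_ts_gt_1 by simp
  then have "0 < ln (real m)" using L_mult_ln_ts_le by linarith
  then show ?thesis using ln_le_zero_iff[of "real m"] by (cases "m = 0") auto
qed

lemma n_ge_2: "2 \<le> n"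
  using m_gt_1 m_le_n by linarith

lemma ts_power_L_le: "real (t * s) ^ L \<le> real m powr (1/100)"
  using m_gt_1 s_ge_4 t_ge_3 L_mult_ln_ts_le by (intro power_le_powr_if_mult_ln_le) auto

lemma ts_le_ts_power_L: "real (t * s) \<le> real (t * s) ^ L"
proof -
  have "1 \<le> t * s" using t_ge_3 s_ge_4 by (simp add: Suc_le_eq)
  then have "real 1 \<le> real (t * s)" by (simp only: of_nat_le_iff)
  then show ?thesis using power_increasing[of 1 L "real (t * s)"] L_ge_1 by simp
qed

lemma ts_le: "real (t * s) \<le> real n powr (1/100)"
proof -
  have "real (t * s) \<le> real m powr (1/100)" using ts_le_ts_power_L ts_power_L_le by linarith
  also have "\<dots> \<le> real n powr (1/100)" using m_le_n by (intro powr_mono2) auto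
  finally show ?thesis .
qed

lemma t_le_m: "t \<le> m"
proof -
  have "real t \<le> real (t * s)" using s_ge_4 by (simp add: mult_le_cancel_left1)
  also have "\<dots> \<le> real m powr (1/100)" using ts_le_ts_power_L ts_power_L_le by linarith
  also have "\<dots> \<le> real m powr 1" using m_gt_1 by (intro powr_mono) auto
  finally show ?thesis using m_gt_1 by simp
qed

lemma s_power_L_le: "real s ^ L \<le> real n powr (1/100)"
proof -
  have "real s \<le> real (t * s)" using t_ge_3 by (simp add: mult_le_cancel_right1)
  then have "real s ^ L \<le> real (t * s) ^ L" by (intro power_mono) auto
  also have "\<dots> \<le> real m powr (1/100)" by (rule ts_power_L_le)
  also have "\<dots> \<le> real n powr (1/100)" using m_le_n by (intro powr_mono2) auto
  finally show ?thesis .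
qed

lemma L_le_ln_n: "real L \<le> ln (real n)"
proof -
  have "real L \<le> real L * ln (real (t * s))" using L_ge_1 ln_ts_gt_1 by simp
  also have "\<dots> \<le> 1/100 * ln (real m)" by (rule L_mult_ln_ts_le)
  also have "\<dots> \<le> ln (real n)"
  proof -
    have "ln (real m) \<le> ln (real n)" "0 \<le> ln (real m)" using m_gt_1 m_le_n by simp_all
    then show ?thesis by linarith
  qed
  finally show ?thesis .
qed


lemma graphs_nonempty: "biregular_graphs m n s t \<noteq> {}"
  using biregular_graphs_nonempty t_ge_3 t_le_m n_mult_t by simp

lemma switching_ratio_le:
  assumes h: "real h \<le> 18 * ln (real n)"
  shows "0 < n * t - (2 * t * s + h)" "switching_ratio n s t h \<le> 2 * real s / real n"
proof -
  have "real (2 * t * s + h) \<le> 2 * real n powr (1/100) + 18 * ln (real n)"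
    using ts_le h by simp
  also have "\<dots> \<le> real n" by (rule n_large)
  finally have small: "2 * t * s + h \<le> n" by (simp only: of_nat_le_iff)
  have "3 * n \<le> n * t" using t_ge_3 by simp
  then have "n * t \<le> 2 * (n * t - (2 * t * s + h))" using small by linarith
  then have "real (n * t) \<le> real (2 * (n * t - (2 * t * s + h)))" by (simp only: of_nat_le_iff)
  then have half: "real (n * t) / 2 \<le> real (n * t - (2 * t * s + h))" by simp
  moreover have pos: "0 < real (n * t) / 2" using n_ge_2 t_ge_3 by simp
  ultimately show "0 < n * t - (2 * t * s + h)" by linarith
  have X: "0 < real (n * t - (2 * t * s + h))" using half pos by linarith
  have "switching_ratio n s t h \<le> real (t * s) / (real (n * t) / 2)"
    unfolding switching_ratio_def by (rule divide_left_mono[OF half]) (simp_all only: X pos mult_pos_pos of_nat_0_le_iff)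
  also have "\<dots> = 2 * real s / real n" using t_ge_3 n_ge_2 by (simp add: field_simps)
  finally show "switching_ratio n s t h \<le> 2 * real s / real n" .
qed

lemma excess_factor_le:
  assumes e: "1 \<le> e" "e \<le> 2" and q: "0 \<le> q" "q \<le> 2 * real s / real n"
    and P: "P = 4 * e * (L + 1)"
  shows "real P * (exp (real P) * (4 * real s) ^ P * real P ^ (2 * e) * q ^ e)
    \<le> excess_bound e (real n)"
proof -
  have "real P \<le> 8 * real e * ln (real n)"
  proof -
    have "P \<le> 8 * e * L" using P L_ge_1 by simp
    then have "real P \<le> 8 * real e * real L" by (metis of_nat_le_iff of_nat_mult of_nat_numeral)
    also have "\<dots> \<le> 8 * real e * ln (real n)" using L_le_ln_n by (intro mult_left_mono) auto
    finally show ?thesis .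
  qed
  then have P_pow: "real P ^ (2 * e + 1) \<le> (8 * real e * ln (real n)) ^ (2 * e + 1)"
    by (intro power_mono) auto
  have s_pow: "real s ^ (3 * P + e) \<le> sqrt (real n)"
  proof -
    have "e = 1 \<or> e = 2" using e by linarith
    then have "3 * P + e \<le> L * 50" using P L_ge_1 by auto
    then have "real s ^ (3 * P + e) \<le> (real s ^ L) ^ 50"
      using s_ge_4 by (simp add: power_mult[symmetric] power_increasing)
    also have "\<dots> \<le> (real n powr (1/100)) ^ 50" using s_power_L_le by (intro power_mono) auto
    also have "\<dots> = real n powr (1/2)" using n_ge_2 by (subst powr_power) auto
    also have "\<dots> = sqrt (real n)" by (rule powr_half_sqrt) simp
    finally show ?thesis .
  qed
  have "real P * (exp (real P) * (4 * real s) ^ P * real P ^ (2 * e) * q ^ e)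
      = real P ^ (2 * e + 1) * (exp (real P) * (4 * real s) ^ P) * q ^ e"
    by (simp add: algebra_simps)
  also have "\<dots> \<le> real P ^ (2 * e + 1) * real s ^ (3 * P) * (2 * real s / real n) ^ e"
    using exp_mult_power_le[OF s_ge_4] q by (intro mult_mono power_mono) auto
  also have "\<dots> = 2 ^ e * real P ^ (2 * e + 1) * real s ^ (3 * P + e) / real n ^ e"
    by (simp add: power_add power_divide power_mult_distrib)
  also have "\<dots> \<le> 2 ^ e * (8 * real e * ln (real n)) ^ (2 * e + 1) * sqrt (real n) / real n ^ e"
    using P_pow s_pow n_ge_2 by (intro divide_right_mono mult_mono mult_left_mono) auto
  finally show ?thesis unfolding excess_bound_def .
qed


lemma card_graphs_with_non_tree_edges_le:
  assumes v: "v \<in> bip_vertices n m" and e: "1 \<le> e" "e \<le> 2"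
  shows "real (card {E \<in> biregular_graphs m n s t.
      \<exists>X \<subseteq> non_tree_edges E v (2 * L + 1). finite X \<and> card X = e})
    \<le> excess_bound e (real n) * real (card (biregular_graphs m n s t))"
proof -
  define r where "r = 2 * L + 1"
  define P where "P = 2 * e * (r + 1)"
  define h where "h = P - 1 + e"
  define q where "q = switching_ratio n s t h"
  have "e = 1 \<or> e = 2" using e by linarith
  then have "h \<le> 18 * L" using L_ge_1 by (auto simp: h_def P_def r_def)
  then have "real h \<le> 18 * ln (real n)" using L_le_ln_n by linarith
  note ratio = switching_ratio_le[OF this]
  have q: "0 \<le> q" "q \<le> 2 * real s / real n" using ratio(2) by (simp_all add: q_def switching_ratio_def)
  have "real (n + m) * q \<le> 2 * real n * (2 * real s / real n)"
    using m_le_n q by (intro mult_mono) auto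
  also have "\<dots> = 4 * real s" using n_ge_2 by simp
  finally have nm_q: "real (n + m) * q \<le> 4 * real s" .
  have "real (card {E \<in> biregular_graphs m n s t. \<exists>X \<subseteq> non_tree_edges E v r. finite X \<and> card X = e})
      \<le> (\<Sum>p = 1..P. real (card (witnesses n m v e p)) * q ^ (p - 1 + e)) * real (card (biregular_graphs m n s t))"
    unfolding q_def
  proof (rule card_graphs_with_witness_le[OF _ _ _ ratio(1)])
    fix E assume "E \<in> {E \<in> biregular_graphs m n s t. \<exists>X \<subseteq> non_tree_edges E v r. finite X \<and> card X = e}"
    then obtain X where E: "E \<in> biregular_graphs m n s t"
      and X: "X \<subseteq> non_tree_edges E v r" "finite X" "card X = e" by blast
    then have "X \<noteq> {}" using e by auto
    then show "\<exists>p W f g. 1 \<le> p \<and> p \<le> P \<and> (W, f, g) \<in> witnesses n m v e p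
        \<and> witness_edges v e W f g \<subseteq> bip_edges E"
      using non_tree_edges_witness[OF biregular_graphs_subset[OF E] v X(1,2)] unfolding X(3) P_def
      by blast
  qed (auto simp: h_def)
  also have "\<dots> \<le> real P * (exp (real P) * (4 * real s) ^ P * real P ^ (2 * e) * q ^ e)
      * real (card (biregular_graphs m n s t))"
    using s_ge_4 by (intro mult_right_mono witness_sum_le[OF v q(1) nm_q]) auto
  also have "\<dots> \<le> excess_bound e (real n) * real (card (biregular_graphs m n s t))"
    by (intro mult_right_mono excess_factor_le[OF e q]) (auto simp: P_def r_def)
  finally show ?thesis by (simp add: r_def)
qed

lemma prob_few_non_tree_edges_ge:
  assumes R: "R \<subseteq> bip_vertices n m" and e: "1 \<le> e" "e \<le> 2"
    and good: "\<And>E. E \<in> biregular_graphs m n s t \<Longrightarrow>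
      \<forall>v\<in>R. \<forall>X \<subseteq> non_tree_edges E v (2 * L + 1). finite X \<longrightarrow> card X \<noteq> e \<Longrightarrow> E \<in> A"
  shows "1 - real (card R) * excess_bound e (real n)
    \<le> measure_pmf.prob (pmf_of_set (biregular_graphs m n s t)) A"
proof -
  define \<beta> where "\<beta> = excess_bound e (real n)"
  define Bad where "Bad v = {E \<in> biregular_graphs m n s t.
      \<exists>X \<subseteq> non_tree_edges E v (2 * L + 1). finite X \<and> card X = e}" for v
  have "finite R" using R finite_bip_vertices by (rule finite_subset)
  have "real (card (\<Union>v\<in>R. Bad v)) \<le> (\<Sum>v\<in>R. real (card (Bad v)))"
    using card_UN_le[OF \<open>finite R\<close>, of Bad] by (metis of_nat_le_iff of_nat_sum)
  also have "\<dots> \<le> (\<Sum>v\<in>R. \<beta> * real (card (biregular_graphs m n s t)))"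
    using card_graphs_with_non_tree_edges_le R e unfolding Bad_def \<beta>_def by (intro sum_mono) auto
  finally have "real (card (\<Union>v\<in>R. Bad v)) \<le> real (card R) * \<beta> * real (card (biregular_graphs m n s t))"
    by (simp add: mult.assoc)
  then show ?thesis unfolding \<beta>_def[symmetric]
  proof (rule prob_ge_if_card_bad_le[OF finite_biregular_graphs graphs_nonempty, rotated])
    show "(\<Union>v\<in>R. Bad v) \<subseteq> biregular_graphs m n s t" by (auto simp: Bad_def)
    show "E \<in> A" if "E \<in> biregular_graphs m n s t" "E \<notin> (\<Union>v\<in>R. Bad v)" for E
      using that good by (auto simp: Bad_def)
  qed
qed

lemma prob_acyclic_ball_ge:
  "1 - 2 * (8 * ln (real n)) ^ 3 * sqrt (real n) / real n \<le> measure_pmf.prob (pmf_of_set (biregular_graphs m n s t))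
    {E. \<exists>i < n. \<forall>C. \<not> is_cycle (ball_graph E (Inl i) (2 * L + 1)) C}"
proof -
  have "{Inl 0} \<subseteq> bip_vertices n m" using n_ge_2 by (simp add: bip_vertices_def)
  then have "1 - real (card {Inl 0 :: nat + nat}) * excess_bound 1 (real n)
      \<le> measure_pmf.prob (pmf_of_set (biregular_graphs m n s t))
        {E. \<exists>i < n. \<forall>C. \<not> is_cycle (ball_graph E (Inl i) (2 * L + 1)) C}"
  proof (rule prob_few_non_tree_edges_ge)
    fix E assume "\<forall>v\<in>{Inl 0}. \<forall>X \<subseteq> non_tree_edges E v (2 * L + 1). finite X \<longrightarrow> card X \<noteq> 1"
    then have no_one: "\<forall>X \<subseteq> non_tree_edges E (Inl 0) (2 * L + 1). finite X \<longrightarrow> card X \<noteq> 1" by simp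
    have "non_tree_edges E (Inl 0) (2 * L + 1) = {}"
    proof (rule equals0I)
      fix x assume "x \<in> non_tree_edges E (Inl 0) (2 * L + 1)"
      then show False using no_one[rule_format, of "{x}"] by simp
    qed
    then have "\<forall>C. \<not> is_cycle (ball_graph E (Inl 0) (2 * L + 1)) C"
      using cycle_meets_non_tree_edges by blast
    moreover have "0 < n" using n_ge_2 by simp
    ultimately show "E \<in> {E. \<exists>i<n. \<forall>C. \<not> is_cycle (ball_graph E (Inl i) (2 * L + 1)) C}"
      by blast
  qed simp_all
  then show ?thesis by (simp add: excess_bound_def)
qed

lemma prob_bicycle_free_ge:
  "1 - 8 * (16 * ln (real n)) ^ 5 * sqrt (real n) / real n \<le> measure_pmf.prob (pmf_of_set (biregular_graphs m n s t))
    {E. bicycle_free_at n m E (2 * L + 1)}"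
proof -
  have "1 - real (card (bip_vertices n m)) * excess_bound 2 (real n)
      \<le> measure_pmf.prob (pmf_of_set (biregular_graphs m n s t)) {E. bicycle_free_at n m E (2 * L + 1)}"
  proof (rule prob_few_non_tree_edges_ge[OF order_refl])
    fix E assume no_two: "\<forall>v\<in>bip_vertices n m. \<forall>X \<subseteq> non_tree_edges E v (2 * L + 1). finite X \<longrightarrow> card X \<noteq> 2"
    show "E \<in> {E. bicycle_free_at n m E (2 * L + 1)}" unfolding mem_Collect_eq bicycle_free_at_def
    proof (intro ballI allI impI, rule ccontr)
      fix v C C' assume v: "v \<in> Inl ` {..<n} \<union> Inr ` {..<m}"
        and C: "is_cycle (ball_graph E v (2 * L + 1)) C" "is_cycle (ball_graph E v (2 * L + 1)) C'"
        and "C \<noteq> C'"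
      obtain e1 e2 where "e1 \<in> non_tree_edges E v (2 * L + 1)" "e2 \<in> non_tree_edges E v (2 * L + 1)"
        "e1 \<noteq> e2" using two_cycles_two_non_tree_edges[OF C \<open>C \<noteq> C'\<close>] by blast
      then have "{e1, e2} \<subseteq> non_tree_edges E v (2 * L + 1)" "finite {e1, e2}" "card {e1, e2} = 2" by auto
      moreover have "v \<in> bip_vertices n m" using v by (simp add: bip_vertices_def)
      then have "\<forall>X \<subseteq> non_tree_edges E v (2 * L + 1). finite X \<longrightarrow> card X \<noteq> 2" using no_two by blast
      ultimately show False by blast
    qed
  qed simp_all
  moreover have "real (card (bip_vertices n m)) * excess_bound 2 (real n) \<le> 2 * real n * excess_bound 2 (real n)"
    using m_le_n n_ge_2 by (intro mult_right_mono excess_bound_nonneg) (simp_all add: card_bip_vertices)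
  moreover have "2 * real n * excess_bound 2 (real n) = 8 * (16 * ln (real n)) ^ 5 * sqrt (real n) / real n"
    using n_ge_2 by (simp add: excess_bound_def power2_eq_square)
  ultimately show ?thesis by linarith
qed

end

theorem proposition4p1:
  "\<exists>c>0. \<forall>(c0::real) (\<alpha>::real) (N::nat \<Rightarrow> nat) (m::nat \<Rightarrow> nat) (s::nat \<Rightarrow> nat)
      (t::nat \<Rightarrow> nat) (L::nat \<Rightarrow> nat).
     0 < c0 \<and> c0 < 1 \<and> 0 < \<alpha> \<and> \<alpha> < 1 \<and> filterlim N at_top sequentially \<and>
     (\<forall>k. real (m k) = \<alpha> * real (N k) \<and> real (t k) = \<alpha> * real (s k) \<and> t k \<ge> 3
          \<and> real (s k) \<le> real (N k) powr c0
          \<and> 1 \<le> L k \<and> real (L k) \<le> c * ln (real (m k)) / ln (real (t k * s k)))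
     \<longrightarrow>
     ((\<lambda>k. measure_pmf.prob (pmf_of_set (biregular_graphs (m k) (N k) (s k) (t k)))
              {E. \<exists>i < N k. \<forall>C. \<not> is_cycle (ball_graph E (Inl i) (2 * L k + 1)) C})
        \<longlonglongrightarrow> 1)
   \<and> ((\<lambda>k. measure_pmf.prob (pmf_of_set (biregular_graphs (m k) (N k) (s k) (t k)))
              {E. bicycle_free_at (N k) (m k) E (2 * L k + 1)})
        \<longlonglongrightarrow> 1)"
proof (intro exI[of _ "1/100"] conjI allI impI)
  fix c0 \<alpha> :: real and N m s t L :: "nat \<Rightarrow> nat"
  assume H: "0 < c0 \<and> c0 < 1 \<and> 0 < \<alpha> \<and> \<alpha> < 1 \<and> filterlim N at_top sequentially \<and>
     (\<forall>k. real (m k) = \<alpha> * real (N k) \<and> real (t k) = \<alpha> * real (s k) \<and> t k \<ge> 3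
          \<and> real (s k) \<le> real (N k) powr c0
          \<and> 1 \<le> L k \<and> real (L k) \<le> 1/100 * ln (real (m k)) / ln (real (t k * s k)))"
  then have N: "filterlim N at_top sequentially" by blast
  define large where "large x \<longleftrightarrow> 2 * x powr (1/100) + 18 * ln x \<le> x" for x :: real
  have params: "biregular_parameters \<alpha> (N k) (m k) (s k) (t k) (L k)" if "large (real (N k))" for k
    using that unfolding large_def by unfold_locales (use H in blast)+
  have large: "eventually large at_top" unfolding large_def by real_asymp
  show "(\<lambda>k. measure_pmf.prob (pmf_of_set (biregular_graphs (m k) (N k) (s k) (t k)))
      {E. \<exists>i < N k. \<forall>C. \<not> is_cycle (ball_graph E (Inl i) (2 * L k + 1)) C}) \<longlonglongrightarrow> 1"
    by (rule tendsto_one_if_lower_bound[OF N _ large, where B = "\<lambda>x. 2 * (8 * ln x) ^ 3 * sqrt x / x"])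
      (real_asymp, erule biregular_parameters.prob_acyclic_ball_ge[OF params], rule measure_pmf.prob_le_1)
  show "(\<lambda>k. measure_pmf.prob (pmf_of_set (biregular_graphs (m k) (N k) (s k) (t k)))
      {E. bicycle_free_at (N k) (m k) E (2 * L k + 1)}) \<longlonglongrightarrow> 1"
    by (rule tendsto_one_if_lower_bound[OF N _ large, where B = "\<lambda>x. 8 * (16 * ln x) ^ 5 * sqrt x / x"])
      (real_asymp, erule biregular_parameters.prob_bicycle_free_ge[OF params], rule measure_pmf.prob_le_1)
qed simp

end
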